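(* Let $n\ge 2$, $R=\mathbb{Q}[q^{\pm1},t^{\pm1}]$, and let $\widehat{C}^*=\widehat{C}^*(\widetilde{B}_n)$ be the augmented Salvetti complex with coefficients in $R_{q,t}$, and $\widehat{I}\subset\widehat{C}^*$ the subcomplex of $\sigma$-invariant elements. Let $C^*(B_n)$ be the Salvetti complex of the Artin group of type $B_n$ with coefficients in $R$, where $B_n$ has vertices $1,\dots,n$ (path $1-2-\dots-n$, edge $\{n-1,n\}$ labelled $4$, others $3$), vertices $1,\dots,n-1$ act by $-q$ and vertex $n$ by $-t$. Define $\beta:C^*(B_n)\to\widehat{C}^*$ on basis elements by: for $\Gamma\subset\{1,\dots,n\}$ let $\Gamma^+=\{j+1: j\in\Gamma, j\ge2\}\subset\{3,\dots,n+1\}$; if $1\notin\Gamma$ then $\beta(e_\Gamma)=e_{\Gamma^+}$, and if $1\in\Gamma$ then $\beta(e_\Gamma)=e_{\Gamma^+\cup\{1\}}+e_{\Gamma^+\cup\{2\}}$. Then $\beta$ is an isomorphism of cochain complexes from $C^*(B_n)$ onto $\widehat{I}$.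
   Context: Salvetti complex: for a Coxeter system $(W,S)$ with $S$ linearly ordered, an abelian representation $\eta$ of the Artin group into units of a ring $R$, and an $R$-module $M$, the cochain complex $C^*(W;M)$ has $C^k=\bigoplus_{\Gamma\subset S,\ |\Gamma|=k,\ |W_\Gamma|<\infty} M\,e_\Gamma$ and differential $d(e_\Gamma)=\sum (-1)^{\alpha(\Gamma,\Gamma')}\frac{W_{\Gamma'}(\eta)}{W_\Gamma(\eta)}e_{\Gamma'}$, the sum over $\Gamma'=\Gamma\cup\{s'\}\supsetneq\Gamma$ with $W_{\Gamma'}$ finite, $\alpha(\Gamma,\Gamma')=|\{s\in\Gamma: s<s'\}|$, and $W_\Gamma(\eta)=\sum_{w\in W_\Gamma}(-1)^{\ell(w)}\eta(\psi(w))$ ($\psi$ the canonical section $W\to$ Artin group). When generator $s$ acts by $-q$ (resp. $-t$), $W_\Gamma(\eta)=\sum_{w\in W_\Gamma}q^{a(w)}t^{b(w)}$ with $a(w)$, $b(w)$ the numbers of $q$-type and $t$-type letters in a reduced word. Type $\widetilde{B}_n$: vertices $S=\{1,\dots,n+1\}$, $1$ and $2$ joined to $3$, $i$ joined to $i+1$ for $3\le i\le n$, all labels $3$ except $\{n,n+1\}$ with label $4$; $R_{q,t}$ is $R$ with generators $1,\dots,n$ acting by $-q$ and $n+1$ by $-t$. Proper subsets of $S$ are exactly those with finite parabolic subgroup. The augmented complex is $\widehat{C}^*=C^*(\widetilde{B}_n;R_{q,t})\oplus R\,e_S$, with $d(e_\Gamma)$ for $|\Gamma|=n$ additionally containing the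 term $(-1)^{\alpha(\Gamma,S)}\frac{\widehat{W}(q,t)}{W_\Gamma(q,t)}e_S$, where $\widehat{W}(q,t)=[2(n-1)]_q!!\,[n]_q\prod_{i=0}^{n-1}(1+tq^i)$, $[m]_q=1+\dots+q^{m-1}$, $[2k]_q!!=\prod_{i=1}^k[2i]_q$. The involution $\sigma$ of $\widehat{C}^*$ is: $\sigma(e_\Gamma)=e_\Gamma$ if $1,2\notin\Gamma$; $\sigma(e_\Gamma)=-e_\Gamma$ if $1,2\in\Gamma$ (including $\Gamma=S$); and if $\Gamma$ contains exactly one of $1,2$, $\sigma(e_\Gamma)=e_{\Gamma'}$ where $\Gamma'$ is obtained by exchanging $1$ and $2$. *)

theory Defs
  imports Complex_Main "HOL-Library.Poly_Mapping" "HOL-Library.Product_Plus"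
begin

text \<open>A Coxeter matrix on a generator set S of naturals: m s t is the label of the
  pair {s,t} (2 for non-adjacent vertices). All labels occurring here are finite.
  Elements of W are equivalence classes of words over S modulo the congruence
  generated by the relators s s and (s t)^(m s t).\<close>

type_synonym coxmat = "nat \<Rightarrow> nat \<Rightarrow> nat"

inductive cox_rel :: "nat set \<Rightarrow> coxmat \<Rightarrow> nat list \<Rightarrow> nat list \<Rightarrow> bool"
  for S :: "nat set" and m :: coxmat where
  refl: "set w \<subseteq> S \<Longrightarrow> cox_rel S m w w"
| sym: "cox_rel S m v w \<Longrightarrow> cox_rel S m w v"
| trans: "cox_rel S m u v \<Longrightarrow> cox_rel S m v w \<Longrightarrow> cox_rel S m u w"
| invol: "s \<in> S \<Longrightarrow> set u \<subseteq> S \<Longrightarrow> set v \<subseteq> S \<Longrightarrow>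
           cox_rel S m (u @ [s, s] @ v) (u @ v)"
| braid: "s \<in> S \<Longrightarrow> t \<in> S \<Longrightarrow> s \<noteq> t \<Longrightarrow> set u \<subseteq> S \<Longrightarrow> set v \<subseteq> S \<Longrightarrow>
           cox_rel S m (u @ concat (replicate (m s t) [s, t]) @ v) (u @ v)"

definition cox_class :: "nat set \<Rightarrow> coxmat \<Rightarrow> nat list \<Rightarrow> nat list set" where
  "cox_class S m w = {v. cox_rel S m w v}"

definition parabolic :: "nat set \<Rightarrow> coxmat \<Rightarrow> nat set \<Rightarrow> nat list set set" where
  "parabolic S m \<Gamma> = {cox_class S m w | w. set w \<subseteq> \<Gamma>}"

definition cox_length :: "nat list set \<Rightarrow> nat" where
  "cox_length C = (LEAST k. \<exists>w\<in>C. length w = k)"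

definition reduced_word :: "nat list set \<Rightarrow> nat list" where
  "reduced_word C = (SOME w. w \<in> C \<and> length w = cox_length C)"

text \<open>W_Gamma(eta) = sum over w in W_Gamma of (-1)^l(w) eta(psi(w)), with eta abelian,
  so eta(psi(w)) is the product of eta over a reduced word of w.\<close>
definition poincare :: "nat set \<Rightarrow> coxmat \<Rightarrow> (nat \<Rightarrow> 'r::comm_ring_1) \<Rightarrow> nat set \<Rightarrow> 'r" where
  "poincare S m \<eta> \<Gamma> = (\<Sum>C\<in>parabolic S m \<Gamma>.
      (-1) ^ cox_length C * prod_list (map \<eta> (reduced_word C)))"

definition fin_type :: "nat set \<Rightarrow> coxmat \<Rightarrow> nat set \<Rightarrow> bool" where
  "fin_type S m \<Gamma> \<longleftrightarrow> \<Gamma> \<subseteq> S \<and> finite (parabolic S m \<Gamma>)"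

text \<open>Cochains: functions from subsets Gamma to R (coefficient of e_Gamma).\<close>

definition alpha :: "nat set \<Rightarrow> nat \<Rightarrow> nat" where
  "alpha \<Gamma> s' = card {s\<in>\<Gamma>. s < s'}"

text \<open>Exact quotient a/b in the ring (unique in a domain when it exists).\<close>
definition rdiv :: "'r::comm_ring_1 \<Rightarrow> 'r \<Rightarrow> 'r" where
  "rdiv a b = (THE c. b * c = a)"

definition salvetti_coef ::
  "nat set \<Rightarrow> coxmat \<Rightarrow> (nat \<Rightarrow> 'r::comm_ring_1) \<Rightarrow> nat set \<Rightarrow> nat set \<Rightarrow> 'r" where
  "salvetti_coef S m \<eta> \<Gamma> \<Gamma>' =
     (if fin_type S m \<Gamma> \<and> fin_type S m \<Gamma>' \<and> \<Gamma> \<subseteq> \<Gamma>' \<and> card (\<Gamma>' - \<Gamma>) = 1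
      then (-1) ^ alpha \<Gamma> (the_elem (\<Gamma>' - \<Gamma>)) *
           rdiv (poincare S m \<eta> \<Gamma>') (poincare S m \<eta> \<Gamma>)
      else 0)"

definition salvetti_d ::
  "nat set \<Rightarrow> coxmat \<Rightarrow> (nat \<Rightarrow> 'r::comm_ring_1) \<Rightarrow> (nat set \<Rightarrow> 'r) \<Rightarrow> (nat set \<Rightarrow> 'r)" where
  "salvetti_d S m \<eta> x = (\<lambda>\<Gamma>'. \<Sum>\<Gamma>\<in>{\<Gamma>. fin_type S m \<Gamma>}. x \<Gamma> * salvetti_coef S m \<eta> \<Gamma> \<Gamma>')"

definition cochains :: "nat set \<Rightarrow> coxmat \<Rightarrow> (nat set \<Rightarrow> 'r::comm_ring_1) set" where
  "cochains S m = {x. \<forall>\<Gamma>. \<not> fin_type S m \<Gamma> \<longrightarrow> x \<Gamma> = 0}"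

section \<open>The ring R = Q[q^{+-1}, t^{+-1}] as the group algebra Q[Z^2]\<close>

type_synonym R = "int \<times> int \<Rightarrow>\<^sub>0 rat"

definition qv :: R where "qv = Poly_Mapping.single (1, 0) 1"
definition tv :: R where "tv = Poly_Mapping.single (0, 1) 1"

definition adjacent :: "nat \<Rightarrow> nat \<Rightarrow> bool" where
  "adjacent i j \<longleftrightarrow> i + 1 = j \<or> j + 1 = i"

definition B_mat :: "nat \<Rightarrow> coxmat" where
  "B_mat n i j = (if {i, j} = {n - 1, n} then 4 else if adjacent i j then 3 else 2)"

text \<open>Affine B_n on {1..n+1}: 1 and 2 joined to 3, i joined to i+1 for 3 <= i <= n,
  edge {n,n+1} labelled 4. For n = 2 the vertex n+1 = 3 is joined to both 1 and 2, and
  both edges get label 4 (so that sigma is a diagram automorphism).\<close>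
definition Bt_edge :: "nat \<Rightarrow> nat \<Rightarrow> nat \<Rightarrow> bool" where
  "Bt_edge n i j \<longleftrightarrow> {i, j} = {1, 3} \<or> {i, j} = {2, 3} \<or>
     (\<exists>k. 3 \<le> k \<and> k \<le> n \<and> {i, j} = {k, k + 1})"

definition Bt_mat :: "nat \<Rightarrow> coxmat" where
  "Bt_mat n i j = (if Bt_edge n i j \<and> (n + 1 = i \<or> n + 1 = j) then 4
                   else if Bt_edge n i j then 3 else 2)"

definition eta_B :: "nat \<Rightarrow> nat \<Rightarrow> R" where
  "eta_B n s = (if s = n then - tv else - qv)"

definition eta_Bt :: "nat \<Rightarrow> nat \<Rightarrow> R" where
  "eta_Bt n s = (if s = n + 1 then - tv else - qv)"

definition qint :: "nat \<Rightarrow> R" where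
  "qint k = (\<Sum>i<k. qv ^ i)"

definition qdfact :: "nat \<Rightarrow> R" where
  "qdfact k = (\<Prod>i\<in>{1..k}. qint (2 * i))"

definition What :: "nat \<Rightarrow> R" where
  "What n = qdfact (n - 1) * qint n * (\<Prod>i<n. 1 + tv * qv ^ i)"

abbreviation St :: "nat \<Rightarrow> nat set" where "St n \<equiv> {1..n+1}"

definition chat :: "nat \<Rightarrow> (nat set \<Rightarrow> R) set" where
  "chat n = {x. \<forall>\<Gamma>. \<not> \<Gamma> \<subseteq> St n \<longrightarrow> x \<Gamma> = 0}"

definition dhat :: "nat \<Rightarrow> (nat set \<Rightarrow> R) \<Rightarrow> (nat set \<Rightarrow> R)" where
  "dhat n x = (\<lambda>\<Gamma>'. salvetti_d (St n) (Bt_mat n) (eta_Bt n) x \<Gamma>' +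
     (if \<Gamma>' = St n then
        (\<Sum>\<Gamma>\<in>{\<Gamma>. \<Gamma> \<subseteq> St n \<and> card \<Gamma> = n}.
           x \<Gamma> * ((-1) ^ alpha \<Gamma> (the_elem (St n - \<Gamma>)) *
                   rdiv (What n) (poincare (St n) (Bt_mat n) (eta_Bt n) \<Gamma>)))
      else 0))"

definition ind :: "nat set \<Rightarrow> nat set \<Rightarrow> R" where
  "ind A \<Delta> = (if \<Delta> = A then 1 else 0)"

definition swap12 :: "nat set \<Rightarrow> nat set" where
  "swap12 \<Gamma> = (\<lambda>i. if i = 1 then 2 else if i = 2 then 1 else i) ` \<Gamma>"

definition sigma_e :: "nat set \<Rightarrow> nat set \<Rightarrow> R" where
  "sigma_e \<Gamma> = (if 1 \<notin> \<Gamma> \<and> 2 \<notin> \<Gamma> then ind \<Gamma>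
                 else if 1 \<in> \<Gamma> \<and> 2 \<in> \<Gamma> then - ind \<Gamma>
                 else ind (swap12 \<Gamma>))"

definition sigma :: "nat \<Rightarrow> (nat set \<Rightarrow> R) \<Rightarrow> (nat set \<Rightarrow> R)" where
  "sigma n x = (\<lambda>\<Delta>. \<Sum>\<Gamma>\<in>Pow (St n). x \<Gamma> * sigma_e \<Gamma> \<Delta>)"

definition Ihat :: "nat \<Rightarrow> (nat set \<Rightarrow> R) set" where
  "Ihat n = {x \<in> chat n. sigma n x = x}"

definition shift_plus :: "nat set \<Rightarrow> nat set" where
  "shift_plus \<Gamma> = (\<lambda>j. j + 1) ` {j \<in> \<Gamma>. 2 \<le> j}"

definition beta_e :: "nat set \<Rightarrow> nat set \<Rightarrow> R" where
  "beta_e \<Gamma> = (if 1 \<notin> \<Gamma> then ind (shift_plus \<Gamma>)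
                else (\<lambda>\<Delta>. ind (insert 1 (shift_plus \<Gamma>)) \<Delta> + ind (insert 2 (shift_plus \<Gamma>)) \<Delta>))"

definition beta :: "nat \<Rightarrow> (nat set \<Rightarrow> R) \<Rightarrow> (nat set \<Rightarrow> R)" where
  "beta n x = (\<lambda>\<Delta>. \<Sum>\<Gamma>\<in>Pow {1..n}. x \<Gamma> * beta_e \<Gamma> \<Delta>)"

end

theory Submission
  imports Defs
begin

(*
  The folding kappa : {1..n+1} -> {1..n} (1, 2 |-> 1 and j |-> j - 1 otherwise) maps
  the Coxeter diagram of B~_n onto that of B_n, and its two sections iota1, iota2
  (1 |-> 1 resp. 1 |-> 2, j |-> j + 1 otherwise) are label-preserving embeddings of B_n.
  Explicitly, beta(x)(Delta) = x(kappa Delta) if Delta does not contain both 1 and 2, and 0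
  otherwise.  A label-preserving folding identifies the parabolic subgroup W_Gamma of B_n
  with that of iota Gamma in B~_n, preserving lengths and eta-weights; hence the Salvetti
  coefficients of the two complexes agree along iota1 and iota2.  The only other
  contributions, from Gamma containing 1 to the face iota1 Gamma + {2} = iota2 Gamma + {1},
  and the top-degree augmentation terms, cancel in pairs because the exponents alpha of
  their signs differ by one.  Finally a cochain is sigma-invariant iff it vanishes on faces containing
  both 1 and 2 (R has no 2-torsion) and is symmetric under exchanging 1 and 2, which is
  exactly the image of beta.
*)

section \<open>The word relation of a Coxeter presentation\<close>

declare cox_rel.trans[trans]

lemma set_concat_rep: "set (concat (replicate k [s,t])) \<subseteq> {s,t}"
  by (induction k) auto

lemma cox_rel_set: "cox_rel S m u v \<Longrightarrow> set u \<subseteq> S \<and> set v \<subseteq> S"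
proof (induction rule: cox_rel.induct)
  case (braid s t u v) then show ?case using set_concat_rep[of "m s t" s t] by auto
qed auto

lemma cox_rel_app_left: "cox_rel S m u v \<Longrightarrow> set w \<subseteq> S \<Longrightarrow> cox_rel S m (w@u) (w@v)"
proof (induction rule: cox_rel.induct)
  case (refl w') then show ?case by (intro cox_rel.refl) auto
next
  case (sym v w') then show ?case by (blast intro: cox_rel.sym)
next
  case (trans u v w') then show ?case by (blast intro: cox_rel.trans)
next
  case (invol s u v) then show ?case using cox_rel.invol[of s S "w@u" v m] by simp
next
  case (braid s t u v) then show ?case using cox_rel.braid[of s S t "w@u" v m] by simp
qed

lemma cox_rel_app_right: "cox_rel S m u v \<Longrightarrow> set w \<subseteq> S \<Longrightarrow> cox_rel S m (u@w) (v@w)"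
proof (induction rule: cox_rel.induct)
  case (refl w') then show ?case by (intro cox_rel.refl) auto
next
  case (sym v w') then show ?case by (blast intro: cox_rel.sym)
next
  case (trans u v w') then show ?case by (blast intro: cox_rel.trans)
next
  case (invol s u v) then show ?case using cox_rel.invol[of s S u "v@w" m] by simp
next
  case (braid s t u v) then show ?case using cox_rel.braid[of s S t u "v@w" m] by simp
qed

lemma cox_rel_cong: "cox_rel S m u u' \<Longrightarrow> cox_rel S m v v' \<Longrightarrow> cox_rel S m (u@v) (u'@v')"
proof -
  assume a: "cox_rel S m u u'" and b: "cox_rel S m v v'"
  have "cox_rel S m (u@v) (u'@v)" using cox_rel_app_right[OF a] cox_rel_set[OF b] by simp
  also have "cox_rel S m (u'@v) (u'@v')" using cox_rel_app_left[OF b] cox_rel_set[OF a] by simp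
  finally show ?thesis .
qed

lemma cox_rel_ss: "s \<in> S \<Longrightarrow> cox_rel S m [s,s] []"
  using cox_rel.invol[of s S "[]" "[]" m] by simp

lemma cox_rel_inv: "set w \<subseteq> S \<Longrightarrow> cox_rel S m (w @ rev w) []"
proof (induction w)
  case Nil then show ?case by (simp add: cox_rel.refl)
next
  case (Cons a w)
  have "cox_rel S m ([a] @ (w @ rev w) @ [a]) ([a] @ [] @ [a])"
    using Cons by (intro cox_rel_cong cox_rel.refl) auto
  also have "cox_rel S m ([a] @ [] @ [a]) []" using Cons cox_rel_ss[of a S m] by simp
  finally show ?case by simp
qed

lemma cox_rel_inv': "set w \<subseteq> S \<Longrightarrow> cox_rel S m (rev w @ w) []"
  using cox_rel_inv[of "rev w" S m] by simp

lemma cox_rel_cancel_left: "set c \<subseteq> S \<Longrightarrow> cox_rel S m (c@x) (c@y) \<Longrightarrow> cox_rel S m x y"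
proof -
  assume c: "set c \<subseteq> S" and r: "cox_rel S m (c@x) (c@y)"
  have x: "set x \<subseteq> S" and y: "set y \<subseteq> S" using cox_rel_set[OF r] by auto
  have "cox_rel S m x ((rev c @ c) @ x)"
    using cox_rel_app_right[OF cox_rel_inv'[OF c] x] by (simp add: cox_rel.sym)
  also have "cox_rel S m ((rev c @ c) @ x) ((rev c @ c) @ y)"
    using cox_rel_app_left[OF r, of "rev c"] c by simp
  also have "cox_rel S m ((rev c @ c) @ y) y"
    using cox_rel_app_right[OF cox_rel_inv'[OF c] y] by simp
  finally show ?thesis .
qed

lemma cox_rel_move_right: "cox_rel S m x (y@z) \<Longrightarrow> cox_rel S m (x @ rev z) y"
proof -
  assume r: "cox_rel S m x (y@z)"
  have z: "set z \<subseteq> S" and y: "set y \<subseteq> S" using cox_rel_set[OF r] by auto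
  have "cox_rel S m (x @ rev z) (y @ (z @ rev z))"
    using cox_rel_app_right[OF r, of "rev z"] z by simp
  also have "cox_rel S m (y @ (z @ rev z)) (y @ [])"
    using cox_rel_app_left[OF cox_rel_inv[OF z] y] .
  finally show ?thesis by simp
qed

lemma cox_rel_cancel_right: "set c \<subseteq> S \<Longrightarrow> cox_rel S m (x@c) (y@c) \<Longrightarrow> cox_rel S m x y"
proof -
  assume c: "set c \<subseteq> S" and r: "cox_rel S m (x@c) (y@c)"
  have "cox_rel S m (x @ (c @ rev c)) (x @ [])"
    using cox_rel_app_left[OF cox_rel_inv[OF c]] cox_rel_set[OF r] by auto
  then have "cox_rel S m x ((x@c) @ rev c)" by (simp add: cox_rel.sym)
  also have "cox_rel S m ((x@c) @ rev c) y" by (rule cox_rel_move_right) (use r in simp)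
  finally show ?thesis .
qed

lemma cox_rel_rev: "cox_rel S m u v \<Longrightarrow> cox_rel S m (rev u) (rev v)"
proof -
  assume r: "cox_rel S m u v"
  have u: "set u \<subseteq> S" and v: "set v \<subseteq> S" using cox_rel_set[OF r] by auto
  have "cox_rel S m (rev u @ v) (rev u @ u)" using cox_rel_app_left[OF cox_rel.sym[OF r]] u by simp
  also have "cox_rel S m (rev u @ u) []" using cox_rel_inv'[OF u] .
  finally have a: "cox_rel S m (rev u @ v) []" .
  have "cox_rel S m (rev u) (rev u @ (v @ rev v))"
    using cox_rel_app_left[OF cox_rel_inv[OF v], of "rev u"] u by (simp add: cox_rel.sym)
  also have "cox_rel S m (rev u @ v @ rev v) ([] @ rev v)"
    using cox_rel_app_right[OF a] v by simp
  finally show ?thesis by simp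
qed

lemma cox_rel_conj: "cox_rel S m x y \<Longrightarrow> set u \<subseteq> S \<Longrightarrow> cox_rel S m (u@x@rev u) (u@y@rev u)"
  by (metis cox_rel_app_left cox_rel_app_right cox_rel_set append_assoc set_rev)

lemma cox_rel_conj_trivial: "cox_rel S m c [] \<Longrightarrow> set x \<subseteq> S \<Longrightarrow> cox_rel S m (c@x@rev c) x"
proof -
  assume c: "cox_rel S m c []" and x: "set x \<subseteq> S"
  have rc: "cox_rel S m (rev c) []" using cox_rel_rev[OF c] by simp
  have "cox_rel S m (c@(x@rev c)) ([]@(x@[]))"
    by (intro cox_rel_cong c cox_rel.refl rc) (use x in auto)
  then show ?thesis by simp
qed

lemma cox_class_eq: "cox_rel S m u v \<Longrightarrow> cox_class S m u = cox_class S m v"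
  unfolding cox_class_def by (auto intro: cox_rel.trans cox_rel.sym)

lemma cox_class_eq_iff: "set u \<subseteq> S \<Longrightarrow> cox_class S m u = cox_class S m v \<longleftrightarrow> cox_rel S m u v"
proof
  assume u: "set u \<subseteq> S" and e: "cox_class S m u = cox_class S m v"
  have "u \<in> cox_class S m u" unfolding cox_class_def using u by (simp add: cox_rel.refl)
  then have "u \<in> cox_class S m v" using e by simp
  then have "cox_rel S m v u" by (simp add: cox_class_def)
  then show "cox_rel S m u v" by (rule cox_rel.sym)
qed (rule cox_class_eq)

lemma cox_class_mem: "set w \<subseteq> S \<Longrightarrow> w \<in> cox_class S m w"
  by (simp add: cox_class_def cox_rel.refl)

lemma cox_rel_braid_word:
  assumes "a \<in> S" "b \<in> S" "a \<noteq> b"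
  shows "cox_rel S m [] (concat (replicate (m a b) [a,b]))"
  using cox_rel.braid[of a S b "[]" "[]" m] assms by (simp add: cox_rel.sym)

lemma cox_rel_commute: assumes "a \<in> S" "b \<in> S" "a \<noteq> b" "m a b = 2"
  shows "cox_rel S m [a,b] [b,a]"
proof -
  have "cox_rel S m [] ([a,b] @ [a,b])" using cox_rel_braid_word[OF assms(1-3), of m] assms(4)
    by (simp add: numeral_eq_Suc)
  from cox_rel_move_right[OF this] show ?thesis by (simp add: cox_rel.sym)
qed

lemma cox_rel_braid3: assumes "a \<in> S" "b \<in> S" "a \<noteq> b" "m a b = 3"
  shows "cox_rel S m [a,b,a] [b,a,b]"
proof -
  have "cox_rel S m [] ([a,b,a] @ [b,a,b])" using cox_rel_braid_word[OF assms(1-3), of m] assms(4)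
    by (simp add: numeral_eq_Suc)
  from cox_rel_move_right[OF this] show ?thesis by (simp add: cox_rel.sym)
qed

lemma cox_rel_braid4: assumes "a \<in> S" "b \<in> S" "a \<noteq> b" "m a b = 4"
  shows "cox_rel S m [a,b,a,b] [b,a,b,a]"
proof -
  have "cox_rel S m [] ([a,b,a,b] @ [a,b,a,b])" using cox_rel_braid_word[OF assms(1-3), of m] assms(4)
    by (simp add: numeral_eq_Suc)
  from cox_rel_move_right[OF this] show ?thesis by (simp add: cox_rel.sym)
qed

section \<open>Reflection counting\<close>

text \<open>The reflection sequence of a word a1 ... ak: its i-th entry is the word
  a1 ... ai ... a1, i.e. the reflection crossed at the i-th step.\<close>
fun reflections :: "nat list \<Rightarrow> nat list list" where
  "reflections [] = []"
| "reflections (a#w) = [a] # map (\<lambda>x. a # x @ [a]) (reflections w)"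

lemma length_reflections[simp]: "length (reflections w) = length w"
  by (induction w) auto

lemma reflections_append:
  "reflections (u@v) = reflections u @ map (\<lambda>x. u @ x @ rev u) (reflections v)"
  by (induction u) (auto simp: comp_def)

lemma reflections_set: "x \<in> set (reflections w) \<Longrightarrow> set x \<subseteq> set w"
  by (induction w arbitrary: x) force+

lemma reflections_nth:
  "i < length w \<Longrightarrow> reflections w ! i = take i w @ [w!i] @ rev (take i w)"
proof -
  assume i: "i < length w"
  have w: "w = take i w @ (w!i # drop (Suc i) w)" using i by (simp add: id_take_nth_drop)
  have "reflections w = reflections (take i w) @
      map (\<lambda>x. take i w @ x @ rev (take i w)) (reflections (w!i # drop (Suc i) w))"
    by (subst w) (rule reflections_append)
  then show ?thesis using i by (simp add: nth_append min_def)
qed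

definition occurrences :: "nat set \<Rightarrow> coxmat \<Rightarrow> nat list \<Rightarrow> nat list list \<Rightarrow> nat" where
  "occurrences S m r L = length (filter (\<lambda>x. cox_rel S m x r) L)"

lemma occurrences_append[simp]:
  "occurrences S m r (L1 @ L2) = occurrences S m r L1 + occurrences S m r L2"
  by (simp add: occurrences_def)

lemma occurrences_all2:
  "list_all2 (cox_rel S m) L1 L2 \<Longrightarrow> occurrences S m r L1 = occurrences S m r L2"
proof (induction rule: list_all2_induct)
  case (Cons x xs y ys)
  have "cox_rel S m x r \<longleftrightarrow> cox_rel S m y r"
    using Cons(1) by (meson cox_rel.sym cox_rel.trans)
  with Cons show ?case by (simp add: occurrences_def)
qed (simp add: occurrences_def)

lemma occurrences_conj_trivial:
  assumes c: "cox_rel S m c []" and u: "set u \<subseteq> S" and L: "\<forall>x\<in>set L. set x \<subseteq> S"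
  shows "occurrences S m r (map (\<lambda>x. u @ x @ rev u) (map (\<lambda>x. c @ x @ rev c) L))
       = occurrences S m r (map (\<lambda>x. u @ x @ rev u) L)"
proof (rule occurrences_all2, rule list_all2_all_nthI)
  fix j assume "j < length (map (\<lambda>x. u @ x @ rev u) (map (\<lambda>x. c @ x @ rev c) L))"
  then have j: "j < length L" by simp
  have "cox_rel S m (c @ L ! j @ rev c) (L ! j)"
    by (rule cox_rel_conj_trivial[OF c]) (use L j in auto)
  from cox_rel_conj[OF this u] j
  show "cox_rel S m (map (\<lambda>x. u @ x @ rev u) (map (\<lambda>x. c @ x @ rev c) L) ! j)
      (map (\<lambda>x. u @ x @ rev u) L ! j)" by simp
qed simp

fun alt :: "nat \<Rightarrow> nat \<Rightarrow> nat \<Rightarrow> nat list" where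
  "alt s t 0 = []"
| "alt s t (Suc k) = s # alt t s k"

lemma alt_set: "set (alt s t k) \<subseteq> {s,t}"
  by (induction k arbitrary: s t) auto

lemma alt_even: "alt s t (2*k) = concat (replicate k [s,t])"
  by (induction k) (auto simp: numeral_2_eq_2)

lemma alt_snoc: "alt s t (Suc k) = alt s t k @ [if even k then s else t]"
  by (induction k arbitrary: s t) auto

lemma alt_add_even: "alt s t (2*k + l) = alt s t (2*k) @ alt s t l"
  by (induction k) (auto simp: numeral_2_eq_2)

lemma reflections_alt: "reflections (alt s t l) = map (\<lambda>i. alt s t (2*i+1)) [0..<l]"
proof (induction l arbitrary: s t)
  case 0 then show ?case by simp
next
  case (Suc l)
  have e: "s # alt t s (2*i+1) @ [s] = alt s t (2 * Suc i + 1)" for i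
  proof -
    have "alt t s (Suc (2*i+1)) = alt t s (2*i+1) @ [s]" by (subst alt_snoc) simp
    moreover have "alt s t (Suc (Suc (2*i+1))) = s # alt t s (Suc (2*i+1))" by (simp only: alt.simps)
    moreover have "2 * Suc i + 1 = Suc (Suc (2*i+1))" by simp
    ultimately show ?thesis by simp
  qed
  have "reflections (alt s t (Suc l)) = [s] # map (\<lambda>x. s # x @ [s]) (reflections (alt t s l))"
    by simp
  also have "\<dots> = [s] # map (\<lambda>i. alt s t (2 * Suc i + 1)) [0..<l]"
    by (simp only: Suc map_map comp_def e)
  also have "\<dots> = map (\<lambda>i. alt s t (2*i+1)) [0..<Suc l]"
    by (simp add: map_upt_Suc del: upt_Suc alt.simps) simp
  finally show ?case .
qed

lemma map_upt_double: "map f [0..<k+k] = map f [0..<k] @ map (\<lambda>i. f (i+k)) [0..<k]"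
proof -
  have "[0..<k+k] = [0..<k] @ [k..<k+k]" by (rule upt_add_eq_append) simp
  moreover have "[k..<k+k] = map (\<lambda>i. i + k) [0..<k]" by (simp add: map_add_upt)
  ultimately show ?thesis by simp
qed

text \<open>A braid relator crosses every reflection of its dihedral subgroup twice.\<close>
lemma occurrences_braid_even:
  assumes "s \<in> S" "t \<in> S" "s \<noteq> t" "set u \<subseteq> S"
  shows "even (occurrences S m r
           (map (\<lambda>x. u @ x @ rev u) (reflections (concat (replicate (m s t) [s,t])))))"
proof -
  let ?k = "m s t"
  let ?f = "\<lambda>i. u @ alt s t (2*i+1) @ rev u"
  have "reflections (concat (replicate ?k [s,t])) = map (\<lambda>i. alt s t (2*i+1)) [0..<2*?k]"
    by (simp add: reflections_alt flip: alt_even)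
  then have e: "map (\<lambda>x. u @ x @ rev u) (reflections (concat (replicate ?k [s,t])))
      = map ?f [0..<?k] @ map (\<lambda>i. ?f (i + ?k)) [0..<?k]"
    by (simp add: mult_2 map_upt_double del: upt_Suc) (simp add: ac_simps)
  have "list_all2 (cox_rel S m) (map (\<lambda>i. ?f (i + ?k)) [0..<?k]) (map ?f [0..<?k])"
  proof (rule list_all2_all_nthI)
    fix j assume "j < length (map (\<lambda>i. ?f (i + ?k)) [0..<?k])"
    then have j: "j < ?k" by simp
    have a: "alt s t (2*(j+?k)+1) = concat (replicate ?k [s,t]) @ alt s t (2*j+1)"
      using alt_add_even[of s t ?k "2*j+1"] by (simp add: alt_even algebra_simps)
    have "cox_rel S m (alt s t (2*(j+?k)+1)) (alt s t (2*j+1))"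
      unfolding a using cox_rel.braid[of s S t "[]" "alt s t (2*j+1)" m] assms
        alt_set[of s t "2*j+1"]
      by (simp add: subset_iff) blast
    from cox_rel_conj[OF this assms(4)]
    show "cox_rel S m (map (\<lambda>i. ?f (i + ?k)) [0..<?k] ! j) (map ?f [0..<?k] ! j)"
      using j by (simp add: algebra_simps)
  qed simp
  then have "occurrences S m r (map (\<lambda>i. ?f (i + ?k)) [0..<?k]) = occurrences S m r (map ?f [0..<?k])"
    by (rule occurrences_all2)
  then show ?thesis unfolding e by simp
qed

lemma occurrences_parity:
  "cox_rel S m u v \<Longrightarrow> even (occurrences S m r (reflections u)) = even (occurrences S m r (reflections v))"
proof (induction rule: cox_rel.induct)
  case (invol s u v)
  let ?c = "\<lambda>w x. w @ x @ rev w"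
  have refl_v: "\<forall>x\<in>set (reflections v). set x \<subseteq> S" using reflections_set invol by blast
  have sss: "even (occurrences S m r (map (?c u) [[s],[s,s,s]]))"
  proof -
    have "cox_rel S m (u@[s,s,s]@rev u) (u@[s]@rev u)"
      using cox_rel_conj[OF cox_rel.invol[of s S "[]" "[s]" m]] invol by auto
    then have "cox_rel S m (u@[s,s,s]@rev u) r \<longleftrightarrow> cox_rel S m (u@[s]@rev u) r"
      by (meson cox_rel.sym cox_rel.trans)
    then show ?thesis by (simp add: occurrences_def)
  qed
  have split_ssv: "occurrences S m r (reflections (u @ [s,s] @ v)) = occurrences S m r (reflections u)
      + occurrences S m r (map (?c u) [[s],[s,s,s]])
      + occurrences S m r (map (?c u) (map (?c [s,s]) (reflections v)))"
    by (simp add: reflections_append occurrences_def comp_def)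
  have split_uv: "occurrences S m r (reflections (u @ v))
      = occurrences S m r (reflections u) + occurrences S m r (map (?c u) (reflections v))"
    by (simp add: reflections_append)
  show ?case
    by (simp only: split_ssv split_uv even_add sss
        occurrences_conj_trivial[OF cox_rel_ss[of s S m] _ refl_v, of u r] invol) simp
next
  case (braid s t u v)
  let ?c = "\<lambda>w x. w @ x @ rev w"
  let ?B = "concat (replicate (m s t) [s,t])"
  have B: "cox_rel S m ?B []" using cox_rel.braid[of s S t "[]" "[]" m] braid by simp
  have refl_v: "\<forall>x\<in>set (reflections v). set x \<subseteq> S" using reflections_set braid by blast
  have "reflections (u @ ?B @ v) = reflections u @ map (?c u) (reflections ?B)
      @ map (?c u) (map (?c ?B) (reflections v))"
    by (simp add: reflections_append)
  then show ?case
    using occurrences_conj_trivial[OF B _ refl_v, of u r] occurrences_braid_even[of s S t u m r] braid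
    by (simp add: reflections_append)
qed auto

section \<open>Reduced words and well-defined weights\<close>

definition reduced :: "nat set \<Rightarrow> coxmat \<Rightarrow> nat list \<Rightarrow> bool" where
  "reduced S m w \<longleftrightarrow> set w \<subseteq> S \<and> (\<forall>v. cox_rel S m w v \<longrightarrow> length w \<le> length v)"

lemma equal_reflections_delete:
  assumes H: "cox_rel S m (p @ [a] @ rev p) (p @ [a] @ q @ [b] @ rev q @ [a] @ rev p)"
    and S: "set p \<subseteq> S" "a \<in> S" "set q \<subseteq> S" "b \<in> S" "set z \<subseteq> S"
  shows "cox_rel S m (p @ [a] @ q @ [b] @ z) (p @ q @ z)"
proof -
  have "cox_rel S m ([a] @ rev p) (([a] @ q @ [b] @ rev q @ [a]) @ rev p)"
    using cox_rel_cancel_left[OF S(1) H] by simp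
  then have "cox_rel S m ([a] @ []) ([a] @ (q @ [b] @ rev q @ [a]))"
    using cox_rel_cancel_right[of "rev p" S m "[a]"] S by simp
  then have "cox_rel S m [] ((q @ [b]) @ (rev q @ [a]))"
    using cox_rel_cancel_left[of "[a]" S m] S by simp
  from cox_rel_move_right[OF this] have aq: "cox_rel S m (a # q) (q @ [b])" by simp
  have "cox_rel S m (p @ (a # q) @ [b] @ z) (p @ (q @ [b]) @ [b] @ z)"
    by (intro cox_rel_cong aq cox_rel.refl) (use S in auto)
  also have "cox_rel S m (p @ (q @ [b]) @ [b] @ z) ((p @ q) @ z)"
    using cox_rel.invol[of b S "p@q" z m] S by simp
  finally show ?thesis by simp
qed

lemma reduced_reflections_distinct:
  assumes red: "reduced S m w" and ij: "i < j" "j < length w"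
  shows "\<not> cox_rel S m (reflections w ! i) (reflections w ! j)"
proof
  assume H: "cox_rel S m (reflections w ! i) (reflections w ! j)"
  define p where "p = take i w"
  define q where "q = take (j - Suc i) (drop (Suc i) w)"
  define z where "z = drop (Suc j) w"
  have tj: "take j w = p @ [w!i] @ q"
  proof -
    have "take j w = take i w @ take (j - i) (drop i w)"
      using ij by (metis le_add_diff_inverse less_imp_le_nat take_add)
    moreover have "drop i w = w!i # drop (Suc i) w" using ij by (simp add: Cons_nth_drop_Suc)
    moreover have "take (j - i) (w!i # drop (Suc i) w) = w!i # q"
      using ij by (simp add: q_def take_Cons')
    ultimately show ?thesis by (simp add: p_def)
  qed
  have wdec: "w = p @ [w!i] @ q @ [w!j] @ z"
    using id_take_nth_drop[OF ij(2)] by (simp add: tj z_def)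
  have S: "set p \<subseteq> S" "w!i \<in> S" "set q \<subseteq> S" "w!j \<in> S" "set z \<subseteq> S"
    using red unfolding reduced_def by (subst (asm) wdec; auto)+
  have "cox_rel S m (p @ [w!i] @ rev p) (p @ [w!i] @ q @ [w!j] @ rev q @ [w!i] @ rev p)"
    using H ij by (simp add: reflections_nth p_def tj)
  from equal_reflections_delete[OF this S] have "cox_rel S m w (p @ q @ z)" using wdec by simp
  then have "length w \<le> length (p @ q @ z)" using red unfolding reduced_def by blast
  then show False by (subst (asm) (1) wdec) simp
qed

lemma reduced_occurrences_le1:
  assumes red: "reduced S m w"
  shows "occurrences S m r (reflections w) \<le> 1"
proof -
  let ?A = "{i. i < length (reflections w) \<and> cox_rel S m (reflections w ! i) r}"
  have "x = y" if x: "x \<in> ?A" and y: "y \<in> ?A" for x y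
  proof (rule ccontr)
    have xy: "cox_rel S m (reflections w ! x) (reflections w ! y)"
      "cox_rel S m (reflections w ! y) (reflections w ! x)"
      using x y by (auto intro: cox_rel.trans cox_rel.sym)
    assume "x \<noteq> y"
    then consider "x < y" | "y < x" by linarith
    then show False using reduced_reflections_distinct[OF red] xy x y by cases auto
  qed
  then have "card ?A \<le> 1" by (simp add: card_le_Suc0_iff_eq)
  then show ?thesis by (simp add: occurrences_def length_filter_conv_card)
qed

lemma reduced_reflection_classes_distinct:
  assumes r: "reduced S m w"
  shows "distinct (map (cox_class S m) (reflections w))"
proof (subst distinct_conv_nth, intro allI impI)
  fix i j assume i: "i < length (map (cox_class S m) (reflections w))"
    and j: "j < length (map (cox_class S m) (reflections w))" and ne: "i \<noteq> j"
  have si: "set (reflections w ! i) \<subseteq> S"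
    using reflections_set[OF nth_mem[of i "reflections w"]] i r by (auto simp: reduced_def)
  show "map (cox_class S m) (reflections w) ! i \<noteq> map (cox_class S m) (reflections w) ! j"
  proof
    assume "map (cox_class S m) (reflections w) ! i = map (cox_class S m) (reflections w) ! j"
    then have e: "cox_rel S m (reflections w ! i) (reflections w ! j)"
      using i j cox_class_eq_iff[OF si] by simp
    from ne consider "i < j" | "j < i" by linarith
    then show False
      using reduced_reflections_distinct[OF r] e i j by cases (auto intro: cox_rel.sym)
  qed
qed

definition letters_in :: "nat set \<Rightarrow> nat list \<Rightarrow> nat" where
  "letters_in T w = length (filter (\<lambda>a. a \<in> T) w)"

lemma letters_in_append[simp]: "letters_in T (u@v) = letters_in T u + letters_in T v"
  by (simp add: letters_in_def)
lemma letters_in_Cons[simp]: "letters_in T (a#v) = (if a \<in> T then 1 else 0) + letters_in T v"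
  by (simp add: letters_in_def)
lemma letters_in_Nil[simp]: "letters_in T [] = 0"
  by (simp add: letters_in_def)

lemma letters_in_rep:
  "letters_in T (concat (replicate k [s,t])) = k * ((if s \<in> T then 1 else 0) + (if t \<in> T then 1 else 0))"
  by (induction k) auto

text \<open>T is a union of conjugacy classes of generators when it is closed along odd edges.\<close>
definition odd_closed :: "nat set \<Rightarrow> coxmat \<Rightarrow> nat set \<Rightarrow> bool" where
  "odd_closed S m T \<longleftrightarrow> (\<forall>s\<in>S. \<forall>t\<in>S. s \<noteq> t \<longrightarrow> odd (m s t) \<longrightarrow> (s \<in> T \<longleftrightarrow> t \<in> T))"

lemma letters_in_parity:
  assumes odd: "odd_closed S m T"
  shows "cox_rel S m u v \<Longrightarrow> even (letters_in T u) = even (letters_in T v)"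
proof (induction rule: cox_rel.induct)
  case (braid s t u v)
  have "even (letters_in T (concat (replicate (m s t) [s,t])))"
    using odd braid by (auto simp: letters_in_rep odd_closed_def)
  then show ?case by simp
qed auto

lemma odd_reflections_count: "length (filter (\<lambda>x. odd (letters_in T x)) (reflections w)) = letters_in T w"
  by (induction w) (auto simp: comp_def)

lemma reduced_odd_reflection_classes:
  assumes odd: "odd_closed S m T"
    and ra: "reduced S m wa" and rb: "reduced S m wb" and rab: "cox_rel S m wa wb"
  shows "cox_class S m ` set (filter (\<lambda>x. odd (letters_in T x)) (reflections wa))
       \<subseteq> cox_class S m ` set (filter (\<lambda>x. odd (letters_in T x)) (reflections wb))"
proof
  fix C assume "C \<in> cox_class S m ` set (filter (\<lambda>x. odd (letters_in T x)) (reflections wa))"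
  then obtain x where x: "x \<in> set (reflections wa)" "odd (letters_in T x)" and C: "C = cox_class S m x"
    by auto
  have xS: "set x \<subseteq> S" using reflections_set[OF x(1)] ra by (auto simp: reduced_def)
  have "x \<in> set (filter (\<lambda>y. cox_rel S m y x) (reflections wa))" using x xS by (simp add: cox_rel.refl)
  then have "occurrences S m x (reflections wa) \<ge> 1"
    unfolding occurrences_def by (cases "filter (\<lambda>y. cox_rel S m y x) (reflections wa)") auto
  with reduced_occurrences_le1[OF ra, of x] have "occurrences S m x (reflections wa) = 1" by linarith
  then have "odd (occurrences S m x (reflections wa))" by simp
  then have "odd (occurrences S m x (reflections wb))" using occurrences_parity[OF rab] by simp
  then have "filter (\<lambda>y. cox_rel S m y x) (reflections wb) \<noteq> []" unfolding occurrences_def by auto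
  then obtain y where y: "y \<in> set (reflections wb)" "cox_rel S m y x"
    by (metis filter_empty_conv)
  have "odd (letters_in T y)" using letters_in_parity[OF odd y(2)] x(2) by simp
  moreover have "cox_class S m y = C" using C cox_class_eq[OF y(2)] by simp
  ultimately show "C \<in> cox_class S m ` set (filter (\<lambda>x. odd (letters_in T x)) (reflections wb))"
    using y by auto
qed

lemma reduced_letters_in_eq:
  assumes odd: "odd_closed S m T"
  assumes r1: "reduced S m w1" and r2: "reduced S m w2" and rel: "cox_rel S m w1 w2"
  shows "letters_in T w1 = letters_in T w2"
proof -
  let ?O = "\<lambda>w. filter (\<lambda>x. odd (letters_in T x)) (reflections w)"
  have count: "letters_in T w = card (cox_class S m ` set (?O w))" if r: "reduced S m w" for w
  proof -
    have "distinct (map (cox_class S m) (?O w))"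
      using distinct_map_filter[OF reduced_reflection_classes_distinct[OF r]] .
    then show ?thesis using odd_reflections_count[of T w]
      by (metis distinct_card length_map list.set_map)
  qed
  have "cox_class S m ` set (?O w1) = cox_class S m ` set (?O w2)"
    using reduced_odd_reflection_classes[OF odd r1 r2 rel]
      reduced_odd_reflection_classes[OF odd r2 r1 cox_rel.sym[OF rel]] by blast
  then show ?thesis using count[OF r1] count[OF r2] by simp
qed

lemma prod_two_values:
  assumes "\<forall>s\<in>set w. (\<eta>::nat \<Rightarrow> 'r::comm_monoid_mult) s = (if s \<in> T then a else b)"
  shows "prod_list (map \<eta> w) = a ^ letters_in T w * b ^ (length w - letters_in T w)"
  using assms
proof (induction w)
  case (Cons x w)
  have "letters_in T w \<le> length w" by (simp add: letters_in_def)
  with Cons show ?case by (auto simp: Suc_diff_le mult_ac)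
qed simp

definition weight_well_defined :: "nat set \<Rightarrow> coxmat \<Rightarrow> (nat \<Rightarrow> 'r::comm_monoid_mult) \<Rightarrow> bool" where
  "weight_well_defined S m \<eta> \<longleftrightarrow> (\<forall>w1 w2. reduced S m w1 \<longrightarrow> reduced S m w2 \<longrightarrow> cox_rel S m w1 w2 \<longrightarrow>
      prod_list (map \<eta> w1) = prod_list (map \<eta> w2))"

lemma weight_well_defined_two_values:
  assumes odd: "odd_closed S m T"
    and eta: "\<forall>s\<in>S. (\<eta>::nat \<Rightarrow> 'r::comm_monoid_mult) s = (if s \<in> T then a else b)"
  shows "weight_well_defined S m \<eta>"
  unfolding weight_well_defined_def
proof (intro allI impI)
  fix w1 w2 assume r1: "reduced S m w1" and r2: "reduced S m w2" and rel: "cox_rel S m w1 w2"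
  have l: "length w1 = length w2" using r1 r2 rel cox_rel.sym[OF rel] by (force simp: reduced_def)
  have e: "\<forall>s\<in>set w. \<eta> s = (if s \<in> T then a else b)" if "reduced S m w" for w
    using eta that by (auto simp: reduced_def)
  show "prod_list (map \<eta> w1) = prod_list (map \<eta> w2)"
    using prod_two_values[OF e[OF r1]] prod_two_values[OF e[OF r2]] l
      reduced_letters_in_eq[OF odd r1 r2 rel] by simp
qed

lemma cox_length_le: "v \<in> C \<Longrightarrow> cox_length C \<le> length v"
  unfolding cox_length_def by (rule Least_le) auto

lemma reduced_word_props: "v \<in> C \<Longrightarrow> reduced_word C \<in> C \<and> length (reduced_word C) = cox_length C"
proof -
  assume v: "v \<in> C"
  have "\<exists>w\<in>C. length w = cox_length C"
    unfolding cox_length_def by (rule LeastI_ex) (use v in auto)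
  then obtain w where "w \<in> C \<and> length w = cox_length C" by blast
  then show ?thesis unfolding reduced_word_def by (rule someI)
qed

lemma reduced_word_reduced:
  assumes "set w \<subseteq> S"
  shows "reduced S m (reduced_word (cox_class S m w))"
proof -
  let ?C = "cox_class S m w"
  have r: "reduced_word ?C \<in> ?C" "length (reduced_word ?C) = cox_length ?C"
    using reduced_word_props[OF cox_class_mem[OF assms]] by auto
  have wr: "cox_rel S m w (reduced_word ?C)" using r by (simp add: cox_class_def)
  show ?thesis unfolding reduced_def
  proof (intro conjI allI impI)
    show "set (reduced_word ?C) \<subseteq> S" using cox_rel_set[OF wr] by simp
    fix v assume "cox_rel S m (reduced_word ?C) v"
    then have "v \<in> ?C" using cox_rel.trans[OF wr] by (simp add: cox_class_def)
    then show "length (reduced_word ?C) \<le> length v" using r cox_length_le by simp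
  qed
qed

lemma reduced_same_length:
  "reduced S m w \<Longrightarrow> cox_rel S m w v \<Longrightarrow> length v = length w \<Longrightarrow> reduced S m v"
  unfolding reduced_def using cox_rel_set by (metis cox_rel.trans cox_rel.sym)

section \<open>Transport along a label-preserving folding\<close>

text \<open>f folds the diagram (S', m') onto (S, m) with section phi: labels between points with
  different images are preserved.  Points with equal image may be joined arbitrarily.\<close>
definition folding :: "nat set \<Rightarrow> coxmat \<Rightarrow> nat set \<Rightarrow> coxmat \<Rightarrow> (nat \<Rightarrow> nat) \<Rightarrow> (nat \<Rightarrow> nat) \<Rightarrow> bool"
  where
  "folding S m S' m' \<phi> f \<longleftrightarrow> (\<forall>a\<in>S. f (\<phi> a) = a \<and> \<phi> a \<in> S') \<and> (\<forall>s\<in>S'. f s \<in> S) \<and>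
     (\<forall>s\<in>S'. \<forall>t\<in>S'. s \<noteq> t \<longrightarrow> f s \<noteq> f t \<longrightarrow> m (f s) (f t) = m' s t)"

text \<open>A braid relator between two points with the same image folds to a power of s s.\<close>
lemma cox_rel_power_ss: "x \<in> S \<Longrightarrow> set u \<subseteq> S \<Longrightarrow> set v \<subseteq> S \<Longrightarrow>
   cox_rel S m (u @ concat (replicate k [x,x]) @ v) (u @ v)"
proof (induction k)
  case 0 then show ?case by (simp add: cox_rel.refl)
next
  case (Suc k)
  have "cox_rel S m (u @ [x,x] @ (concat (replicate k [x,x]) @ v)) (u @ (concat (replicate k [x,x]) @ v))"
    by (rule cox_rel.invol) (use Suc set_concat_rep[of k x x] in auto)
  then show ?case using Suc by (auto intro: cox_rel.trans)
qed

lemma map_concat_rep: "map f (concat (replicate k [s,t])) = concat (replicate k [f s, f t])"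
  by (induction k) auto

lemma folding_map:
  assumes ok: "folding S m S' m' \<phi> f"
  shows "cox_rel S' m' u v \<Longrightarrow> cox_rel S m (map f u) (map f v)"
proof (induction rule: cox_rel.induct)
  case (refl w) then show ?case using ok by (intro cox_rel.refl) (auto simp: folding_def)
next
  case (sym v w) then show ?case by (blast intro: cox_rel.sym)
next
  case (trans u v w) then show ?case by (blast intro: cox_rel.trans)
next
  case (invol s u v)
  then show ?case using cox_rel.invol[of "f s" S "map f u" "map f v" m] ok by (auto simp: folding_def)
next
  case (braid s t u v)
  have fu: "set (map f u) \<subseteq> S" "set (map f v) \<subseteq> S" "f s \<in> S" "f t \<in> S"
    using braid ok by (auto simp: folding_def)
  show ?case
  proof (cases "f s = f t")
    case True
    then show ?thesis using cox_rel_power_ss[OF fu(3) fu(1) fu(2), of m "m' s t"]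
      by (simp add: map_concat_rep)
  next
    case False
    then have "m (f s) (f t) = m' s t" using ok braid by (auto simp: folding_def)
    then show ?thesis using cox_rel.braid[OF fu(3) fu(4) False fu(1) fu(2), of m]
      by (simp add: map_concat_rep)
  qed
qed

lemma folding_section_map:
  assumes ok: "folding S m S' m' \<phi> f"
  shows "cox_rel S m u v \<Longrightarrow> cox_rel S' m' (map \<phi> u) (map \<phi> v)"
proof (induction rule: cox_rel.induct)
  case (refl w) then show ?case using ok by (intro cox_rel.refl) (auto simp: folding_def)
next
  case (sym v w) then show ?case by (blast intro: cox_rel.sym)
next
  case (trans u v w) then show ?case by (blast intro: cox_rel.trans)
next
  case (invol s u v)
  then show ?case
    using cox_rel.invol[of "\<phi> s" S' "map \<phi> u" "map \<phi> v" m'] ok by (auto simp: folding_def)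
next
  case (braid s t u v)
  have fu: "set (map \<phi> u) \<subseteq> S'" "set (map \<phi> v) \<subseteq> S'" "\<phi> s \<in> S'" "\<phi> t \<in> S'"
    using braid ok by (auto simp: folding_def)
  have fs: "f (\<phi> s) = s" "f (\<phi> t) = t" using ok braid by (auto simp: folding_def)
  have ne: "\<phi> s \<noteq> \<phi> t" using fs braid by metis
  have "m (f (\<phi> s)) (f (\<phi> t)) = m' (\<phi> s) (\<phi> t)"
    using ok fu(3,4) ne fs braid unfolding folding_def by metis
  then have "m' (\<phi> s) (\<phi> t) = m s t" using fs by simp
  then show ?case using cox_rel.braid[OF fu(3) fu(4) ne fu(1) fu(2), of m']
    by (simp add: map_concat_rep)
qed

lemma folding_retract: "folding S m S' m' \<phi> f \<Longrightarrow> set w \<subseteq> S \<Longrightarrow> map f (map \<phi> w) = w"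
  by (induction w) (auto simp: folding_def)

definition section_class :: "nat set \<Rightarrow> coxmat \<Rightarrow> (nat \<Rightarrow> nat) \<Rightarrow> nat list set \<Rightarrow> nat list set" where
  "section_class S' m' \<phi> C = cox_class S' m' (map \<phi> (SOME w. w \<in> C))"

lemma section_class_eq:
  assumes ok: "folding S m S' m' \<phi> f" and w: "set w \<subseteq> S"
  shows "section_class S' m' \<phi> (cox_class S m w) = cox_class S' m' (map \<phi> w)"
proof -
  have "(SOME v. v \<in> cox_class S m w) \<in> cox_class S m w" by (rule someI_ex) (use cox_class_mem[OF w] in blast)
  then have "cox_rel S m w (SOME v. v \<in> cox_class S m w)" by (simp add: cox_class_def)
  from folding_section_map[OF ok this] show ?thesis unfolding section_class_def by (metis cox_class_eq)
qed

lemma parabolic_classes: "parabolic S m \<Gamma> = cox_class S m ` {w. set w \<subseteq> \<Gamma>}"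
  by (auto simp: parabolic_def)

lemma folding_parabolic_image:
  assumes ok: "folding S m S' m' \<phi> f" and G: "\<Gamma> \<subseteq> S"
  shows "parabolic S' m' (\<phi> ` \<Gamma>) = section_class S' m' \<phi> ` parabolic S m \<Gamma>"
proof
  show "section_class S' m' \<phi> ` parabolic S m \<Gamma> \<subseteq> parabolic S' m' (\<phi> ` \<Gamma>)"
  proof
    fix C assume "C \<in> section_class S' m' \<phi> ` parabolic S m \<Gamma>"
    then obtain w where w: "set w \<subseteq> \<Gamma>" "C = section_class S' m' \<phi> (cox_class S m w)"
      by (auto simp: parabolic_classes)
    then have "C = cox_class S' m' (map \<phi> w)" using section_class_eq[OF ok] G by auto
    moreover have "set (map \<phi> w) \<subseteq> \<phi> ` \<Gamma>" using w by auto
    ultimately show "C \<in> parabolic S' m' (\<phi> ` \<Gamma>)" unfolding parabolic_def by blast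
  qed
next
  show "parabolic S' m' (\<phi> ` \<Gamma>) \<subseteq> section_class S' m' \<phi> ` parabolic S m \<Gamma>"
  proof
    fix C assume "C \<in> parabolic S' m' (\<phi> ` \<Gamma>)"
    then obtain w' where w': "set w' \<subseteq> \<phi> ` \<Gamma>" and C: "C = cox_class S' m' w'"
      by (auto simp: parabolic_def)
    have fphi: "\<forall>a\<in>S. f (\<phi> a) = a" using ok by (simp add: folding_def)
    have e: "map \<phi> (map f w') = w'" using w' G fphi by (induction w') auto
    have s: "set (map f w') \<subseteq> \<Gamma>" using w' G fphi by force
    have "C = section_class S' m' \<phi> (cox_class S m (map f w'))"
      using C section_class_eq[OF ok, of "map f w'"] s G e by auto
    then show "C \<in> section_class S' m' \<phi> ` parabolic S m \<Gamma>" using s by (auto simp: parabolic_classes)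
  qed
qed

lemma folding_section_inj:
  assumes ok: "folding S m S' m' \<phi> f" and G: "\<Gamma> \<subseteq> S"
  shows "inj_on (section_class S' m' \<phi>) (parabolic S m \<Gamma>)"
proof (rule inj_onI)
  fix C D assume C: "C \<in> parabolic S m \<Gamma>" and D: "D \<in> parabolic S m \<Gamma>"
    and e: "section_class S' m' \<phi> C = section_class S' m' \<phi> D"
  obtain w1 where w1: "set w1 \<subseteq> \<Gamma>" "C = cox_class S m w1" using C by (auto simp: parabolic_def)
  obtain w2 where w2: "set w2 \<subseteq> \<Gamma>" "D = cox_class S m w2" using D by (auto simp: parabolic_def)
  have "cox_class S' m' (map \<phi> w1) = cox_class S' m' (map \<phi> w2)"
    using e w1 w2 G section_class_eq[OF ok] by auto
  moreover have "set (map \<phi> w1) \<subseteq> S'" using ok w1 G by (auto simp: folding_def)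
  ultimately have "cox_rel S' m' (map \<phi> w1) (map \<phi> w2)" using cox_class_eq_iff by blast
  from folding_map[OF ok this] have "cox_rel S m w1 w2" using folding_retract[OF ok] w1 w2 G by auto
  then show "C = D" using w1 w2 cox_class_eq by simp
qed

text \<open>The section preserves lengths, since the folding maps equivalent words back.\<close>
lemma folding_cox_length:
  assumes ok: "folding S m S' m' \<phi> f" and w: "set w \<subseteq> S"
  shows "cox_length (cox_class S' m' (map \<phi> w)) = cox_length (cox_class S m w)"
proof -
  have "(\<exists>v\<in>cox_class S' m' (map \<phi> w). length v = k) \<longleftrightarrow> (\<exists>v\<in>cox_class S m w. length v = k)" for k
  proof
    assume "\<exists>v\<in>cox_class S' m' (map \<phi> w). length v = k"
    then obtain v where v: "cox_rel S' m' (map \<phi> w) v" "length v = k" by (auto simp: cox_class_def)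
    have "cox_rel S m w (map f v)" using folding_map[OF ok v(1)] folding_retract[OF ok w] by simp
    then show "\<exists>v\<in>cox_class S m w. length v = k" using v by (auto simp: cox_class_def)
  next
    assume "\<exists>v\<in>cox_class S m w. length v = k"
    then obtain v where v: "cox_rel S m w v" "length v = k" by (auto simp: cox_class_def)
    show "\<exists>v\<in>cox_class S' m' (map \<phi> w). length v = k"
      using folding_section_map[OF ok v(1)] v(2) by (auto simp: cox_class_def)
  qed
  then show ?thesis unfolding cox_length_def by simp
qed

lemma folding_weight:
  fixes \<eta> \<eta>' :: "nat \<Rightarrow> 'r::comm_ring_1"
  assumes ok: "folding S m S' m' \<phi> f"
    and eta: "\<forall>s\<in>S'. \<eta>' s = \<eta> (f s)"
    and wd: "weight_well_defined S m \<eta>"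
    and w: "set w \<subseteq> S"
  defines "C \<equiv> cox_class S m w" and "C' \<equiv> cox_class S' m' (map \<phi> w)"
  shows "prod_list (map \<eta>' (reduced_word C')) = prod_list (map \<eta> (reduced_word C))"
proof -
  define r' where "r' = reduced_word C'"
  have phiw: "set (map \<phi> w) \<subseteq> S'" using ok w by (auto simp: folding_def)
  have r'p: "r' \<in> C'" "length r' = cox_length C"
    using reduced_word_props[OF cox_class_mem[OF phiw]] folding_cox_length[OF ok w]
    by (auto simp: r'_def C'_def C_def)
  have r'S: "set r' \<subseteq> S'" using r'p(1) cox_rel_set by (auto simp: C'_def cox_class_def)
  have fr: "cox_rel S m w (map f r')"
    using folding_map[OF ok, of "map \<phi> w" r'] r'p(1) folding_retract[OF ok w]
    by (simp add: C'_def cox_class_def)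
  define r where "r = reduced_word C"
  have red: "reduced S m r" using reduced_word_reduced[OF w] by (simp add: r_def C_def)
  have rC: "r \<in> C" "length r = cox_length C"
    using reduced_word_props[OF cox_class_mem[OF w]] by (auto simp: r_def C_def)
  have "cox_rel S m w r" using rC by (simp add: C_def cox_class_def)
  then have rfr: "cox_rel S m r (map f r')" using fr by (meson cox_rel.sym cox_rel.trans)
  have red2: "reduced S m (map f r')" using reduced_same_length[OF red rfr] r'p rC by simp
  have "prod_list (map \<eta> r) = prod_list (map \<eta> (map f r'))"
    using wd red red2 rfr by (simp add: weight_well_defined_def)
  also have "map \<eta> (map f r') = map \<eta>' r'" unfolding map_map by (rule map_cong) (use r'S eta in auto)
  finally show ?thesis by (simp add: r_def r'_def)
qed

lemma folding_transport:
  fixes \<eta> \<eta>' :: "nat \<Rightarrow> 'r::comm_ring_1"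
  assumes ok: "folding S m S' m' \<phi> f"
    and eta: "\<forall>s\<in>S'. \<eta>' s = \<eta> (f s)"
    and wd: "weight_well_defined S m \<eta>"
    and G: "\<Gamma> \<subseteq> S"
  shows "fin_type S' m' (\<phi> ` \<Gamma>) = fin_type S m \<Gamma>"
    and "poincare S' m' \<eta>' (\<phi> ` \<Gamma>) = poincare S m \<eta> \<Gamma>"
proof -
  let ?h = "section_class S' m' \<phi>"
  note image = folding_parabolic_image[OF ok G] and inj = folding_section_inj[OF ok G]
  show "fin_type S' m' (\<phi> ` \<Gamma>) = fin_type S m \<Gamma>"
    unfolding fin_type_def image using finite_image_iff[OF inj] G ok by (auto simp: folding_def)
  have term_eq: "(-1) ^ cox_length (?h C) * prod_list (map \<eta>' (reduced_word (?h C)))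
      = (-1) ^ cox_length C * prod_list (map \<eta> (reduced_word C))" if C: "C \<in> parabolic S m \<Gamma>" for C
  proof -
    obtain w where w: "set w \<subseteq> \<Gamma>" "C = cox_class S m w" using C by (auto simp: parabolic_def)
    then show ?thesis
      using folding_cox_length[OF ok, of w] folding_weight[OF ok eta wd, of w]
        section_class_eq[OF ok, of w] G by auto
  qed
  have "poincare S' m' \<eta>' (\<phi> ` \<Gamma>) = (\<Sum>C\<in>parabolic S m \<Gamma>.
      (-1) ^ cox_length (?h C) * prod_list (map \<eta>' (reduced_word (?h C))))"
    unfolding poincare_def image by (rule sum.reindex[OF inj, unfolded comp_def])
  also have "\<dots> = poincare S m \<eta> \<Gamma>"
    unfolding poincare_def by (rule sum.cong[OF HOL.refl term_eq])
  finally show "poincare S' m' \<eta>' (\<phi> ` \<Gamma>) = poincare S m \<eta> \<Gamma>" .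
qed

section \<open>Finiteness of W(B_n) by coset enumeration\<close>

lemma exchange_commute:
  assumes r: "cox_rel S m (u @ [s]) ([s'] @ u)" and S: "a \<in> S" "s \<in> S" "set u \<subseteq> S"
    and "a \<noteq> s" "m a s = 2"
  shows "cox_rel S m ((u @ [a]) @ [s]) ([s'] @ (u @ [a]))"
proof -
  have "cox_rel S m (u @ [a, s]) (u @ [s, a])"
    using cox_rel_commute[of a S s m] assms by (intro cox_rel_app_left) auto
  also have "cox_rel S m (u @ [s, a]) ([s'] @ u @ [a])"
    using cox_rel_app_right[OF r, of "[a]"] S by simp
  finally show ?thesis by simp
qed

lemma exchange_braid3:
  assumes r: "cox_rel S m (u @ [b]) ([s'] @ u)" and S: "a \<in> S" "b \<in> S" "set u \<subseteq> S"
    and "a \<noteq> b" "m a b = 3"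
  shows "cox_rel S m ((u @ [a, b]) @ [a]) ([s'] @ (u @ [a, b]))"
proof -
  have "cox_rel S m (u @ [a, b, a]) (u @ [b, a, b])"
    using cox_rel_braid3[of a S b m] assms by (intro cox_rel_app_left) auto
  also have "cox_rel S m (u @ [b, a, b]) ([s'] @ u @ [a, b])"
    using cox_rel_app_right[OF r, of "[a, b]"] S by simp
  finally show ?thesis by simp
qed

lemma exchange_braid4:
  assumes r: "cox_rel S m (u @ [y]) ([s'] @ u)" and S: "x \<in> S" "y \<in> S" "set u \<subseteq> S"
    and "x \<noteq> y" "m x y = 4"
  shows "cox_rel S m ((u @ [x, y, x]) @ [y]) ([s'] @ (u @ [x, y, x]))"
proof -
  have "cox_rel S m (u @ [x, y, x, y]) (u @ [y, x, y, x])"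
    using cox_rel_braid4[of x S y m] assms by (intro cox_rel_app_left) auto
  also have "cox_rel S m (u @ [y, x, y, x]) ([s'] @ u @ [x, y, x])"
    using cox_rel_app_right[OF r, of "[x, y, x]"] S by simp
  finally show ?thesis by simp
qed

text \<open>A walk c 0, ..., c (L-1) in K, all of whose edges are labelled 3 or 4, which meets every
  neighbour of a visited vertex only as the previous or next step, never turns back along a
  3-edge, and turns back along a 4-edge exactly once after traversing it.  Its prefixes
  c 0 \<dots> c (l-1), l \<le> L, will represent the cosets of W(K - {c 0}) in W(K).\<close>
definition coset_walk :: "nat set \<Rightarrow> coxmat \<Rightarrow> nat set \<Rightarrow> (nat \<Rightarrow> nat) \<Rightarrow> nat \<Rightarrow> bool" where
  "coset_walk S m K c L \<longleftrightarrow> K \<subseteq> S \<and> 0 < L \<and> (\<forall>l<L. c l \<in> K) \<and>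
    (\<forall>a\<in>S. \<forall>b\<in>S. m a b = m b a) \<and>
    (\<forall>l. l + 1 < L \<longrightarrow> c l \<noteq> c (l+1) \<and> (m (c l) (c (l+1)) = 3 \<or> m (c l) (c (l+1)) = 4)) \<and>
    (\<forall>l<L. \<forall>s\<in>K. s \<noteq> c l \<longrightarrow> m s (c l) \<noteq> 2 \<longrightarrow> (0 < l \<and> s = c (l-1)) \<or> (l+1 < L \<and> s = c (l+1))) \<and>
    (\<forall>p. p + 2 < L + 1 \<longrightarrow> m (c p) (c (p+1)) = 3 \<longrightarrow> 0 < p \<longrightarrow> c (p-1) \<noteq> c (p+1)) \<and>
    (\<forall>p. p + 1 < L \<longrightarrow> m (c p) (c (p+1)) = 4 \<longrightarrow> \<not> (p + 2 < L \<and> c (p+2) = c p) \<longrightarrow>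
        (0 < p \<and> c (p-1) = c (p+1) \<and> (1 < p \<longrightarrow> c (p-2) \<noteq> c p)))"

definition walk_word :: "(nat \<Rightarrow> nat) \<Rightarrow> nat \<Rightarrow> nat list" where
  "walk_word c l = map c [0..<l]"

lemma walk_word_Suc: "walk_word c (Suc l) = walk_word c l @ [c l]"
  by (simp add: walk_word_def)

lemma walk_word_set: "coset_walk S m K c L \<Longrightarrow> l \<le> L \<Longrightarrow> set (walk_word c l) \<subseteq> K"
  by (auto simp: walk_word_def coset_walk_def)

lemma coset_walk_subset: "coset_walk S m K c L \<Longrightarrow> K \<subseteq> S"
  and coset_walk_pos: "coset_walk S m K c L \<Longrightarrow> 0 < L"
  and coset_walk_in: "coset_walk S m K c L \<Longrightarrow> l < L \<Longrightarrow> c l \<in> K"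
  and coset_walk_sym: "coset_walk S m K c L \<Longrightarrow> a \<in> S \<Longrightarrow> b \<in> S \<Longrightarrow> m a b = m b a"
  and coset_walk_step: "coset_walk S m K c L \<Longrightarrow> l + 1 < L \<Longrightarrow>
     c l \<noteq> c (l+1) \<and> (m (c l) (c (l+1)) = 3 \<or> m (c l) (c (l+1)) = 4)"
  and coset_walk_nbrs: "coset_walk S m K c L \<Longrightarrow> l < L \<Longrightarrow> s \<in> K \<Longrightarrow> s \<noteq> c l \<Longrightarrow>
     m s (c l) \<noteq> 2 \<Longrightarrow> (0 < l \<and> s = c (l-1)) \<or> (l+1 < L \<and> s = c (l+1))"
  and coset_walk_no_turn3: "coset_walk S m K c L \<Longrightarrow> p + 1 < L \<Longrightarrow> m (c p) (c (p+1)) = 3 \<Longrightarrow>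
     0 < p \<Longrightarrow> c (p-1) \<noteq> c (p+1)"
  and coset_walk_turn4: "coset_walk S m K c L \<Longrightarrow> p + 1 < L \<Longrightarrow> m (c p) (c (p+1)) = 4 \<Longrightarrow>
     \<not> (p + 2 < L \<and> c (p+2) = c p) \<Longrightarrow> 0 < p \<and> c (p-1) = c (p+1) \<and> (1 < p \<longrightarrow> c (p-2) \<noteq> c p)"
  unfolding coset_walk_def by auto

text \<open>Right multiplication of a walk prefix by a generator s that is neither the next nor
  the previous step equals left multiplication by a generator of K - {c 0}.  The case in
  which the walk has just arrived at s from the other end of a braid relation of length 3 or
  4 is reduced to a shorter prefix.\<close>
lemma walk_exchange_back:
  assumes ok: "coset_walk S m K c L" and pL: "p + 1 < L"
    and fwd: "\<not> (p + 2 < L \<and> c (p+2) = c p)"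
    and IH: "\<And>j t. j \<le> p \<Longrightarrow> t \<in> K \<Longrightarrow> (j < L \<longrightarrow> t \<noteq> c j) \<Longrightarrow> (0 < j \<longrightarrow> t \<noteq> c (j-1)) \<Longrightarrow>
      \<exists>s'\<in>K - {c 0}. cox_rel S m (walk_word c j @ [t]) ([s'] @ walk_word c j)"
  shows "\<exists>s'\<in>K - {c 0}. cox_rel S m (walk_word c (p+2) @ [c p]) ([s'] @ walk_word c (p+2))"
proof -
  have KS: "K \<subseteq> S" using coset_walk_subset[OF ok] .
  have wS: "\<And>j. j \<le> L \<Longrightarrow> set (walk_word c j) \<subseteq> S" using walk_word_set[OF ok] KS by blast
  have cpK: "c p \<in> K" and c1K: "c (p+1) \<in> K" using coset_walk_in[OF ok] pL by auto
  have dne: "c p \<noteq> c (p+1)" using coset_walk_step[OF ok pL] by simp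
  from coset_walk_step[OF ok pL] consider "m (c p) (c (p+1)) = 3" | "m (c p) (c (p+1)) = 4" by blast
  then show ?thesis
  proof cases
    case 1
    have "0 < p \<longrightarrow> c (p+1) \<noteq> c (p-1)" using coset_walk_no_turn3[OF ok pL 1] by auto
    then obtain s' where s': "s' \<in> K - {c 0}"
        "cox_rel S m (walk_word c p @ [c (p+1)]) ([s'] @ walk_word c p)"
      using IH[of p "c (p+1)"] pL c1K dne by auto
    show ?thesis
      using exchange_braid3[OF s'(2) _ _ wS[of p] dne 1] s'(1) cpK c1K KS pL
      by (auto simp: walk_word_Suc numeral_2_eq_2)
  next
    case 2
    obtain q where q: "p = Suc q" "c q = c (q+2)" "0 < q \<longrightarrow> c (q-1) \<noteq> c (q+1)"
      using coset_walk_turn4[OF ok pL 2 fwd] by (cases p) auto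
    have qL: "q + 2 < L" using pL q by simp
    have xK: "c q \<in> K" and yK: "c (q+1) \<in> K" using coset_walk_in[OF ok] qL by auto
    have xy: "c q \<noteq> c (q+1)" using coset_walk_step[OF ok, of q] qL by auto
    have "m (c (q+2)) (c (q+1)) = m (c (q+1)) (c (q+2))"
      using coset_walk_sym[OF ok] xK yK KS q(2) by (metis subsetD)
    then have mxy: "m (c q) (c (q+1)) = 4" using 2 q by simp
    obtain s' where s': "s' \<in> K - {c 0}"
        "cox_rel S m (walk_word c q @ [c (q+1)]) ([s'] @ walk_word c q)"
      using IH[of q "c (q+1)"] q qL yK xy by fastforce
    show ?thesis
      using exchange_braid4[OF s'(2) _ _ wS[of q] xy mxy] s'(1) xK yK KS qL q
      by (auto simp: walk_word_Suc numeral_2_eq_2)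
  qed
qed

lemma walk_exchange:
  assumes ok: "coset_walk S m K c L"
  shows "l \<le> L \<Longrightarrow> s \<in> K \<Longrightarrow> (l < L \<longrightarrow> s \<noteq> c l) \<Longrightarrow> (0 < l \<longrightarrow> s \<noteq> c (l-1)) \<Longrightarrow>
    \<exists>s'\<in>K - {c 0}. cox_rel S m (walk_word c l @ [s]) ([s'] @ walk_word c l)"
proof (induction l arbitrary: s rule: less_induct)
  case (less l)
  have KS: "K \<subseteq> S" using coset_walk_subset[OF ok] .
  have sS: "s \<in> S" using less KS by auto
  show ?case
  proof (cases l)
    case 0
    then show ?thesis using less coset_walk_pos[OF ok] sS
      by (auto simp: walk_word_def intro!: bexI[of _ s] cox_rel.refl)
  next
    case (Suc l')
    have l'L: "l' < L" and sne: "s \<noteq> c l'" using less Suc by auto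
    have cl'S: "c l' \<in> S" using coset_walk_in[OF ok l'L] KS by auto
    show ?thesis
    proof (cases "m s (c l') = 2")
      case True
      have "0 < l' \<longrightarrow> s \<noteq> c (l'-1)"
        using True coset_walk_step[OF ok, of "l'-1"] l'L by auto
      then obtain s' where s': "s' \<in> K - {c 0}"
          "cox_rel S m (walk_word c l' @ [s]) ([s'] @ walk_word c l')"
        using less.IH[of l' s] Suc less l'L sne by auto
      have comm: "m (c l') s = 2" using True coset_walk_sym[OF ok cl'S sS] by simp
      have wS: "set (walk_word c l') \<subseteq> S" using walk_word_set[OF ok, of l'] l'L KS by auto
      show ?thesis
        using exchange_commute[OF s'(2) cl'S sS wS _ comm] s'(1) sne Suc by (auto simp: walk_word_Suc)
    next
      case False
      have "(0 < l' \<and> s = c (l'-1)) \<or> (l'+1 < L \<and> s = c (l'+1))"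
        using coset_walk_nbrs[OF ok l'L less(3) sne False] .
      moreover have "\<not> (l'+1 < L \<and> s = c (l'+1))" using less Suc by auto
      ultimately obtain p where p: "l' = Suc p" "s = c p" by (cases l') auto
      have "\<exists>s'\<in>K - {c 0}. cox_rel S m (walk_word c (p+2) @ [c p]) ([s'] @ walk_word c (p+2))"
        by (rule walk_exchange_back[OF ok]) (use less Suc p in auto)
      then show ?thesis using Suc p by simp
    qed
  qed
qed

lemma walk_cosets:
  assumes ok: "coset_walk S m K c L"
  shows "set w \<subseteq> K \<Longrightarrow> \<exists>u l. set u \<subseteq> K - {c 0} \<and> l \<le> L \<and> cox_rel S m w (u @ walk_word c l)"
proof (induction w rule: rev_induct)
  case Nil
  show ?case by (intro exI[of _ "[]"] exI[of _ 0]) (auto simp: walk_word_def cox_rel.refl)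
next
  case (snoc s w)
  have KS: "K \<subseteq> S" using coset_walk_subset[OF ok] .
  from snoc obtain u l where ul: "set u \<subseteq> K - {c 0}" "l \<le> L" "cox_rel S m w (u @ walk_word c l)"
    by auto
  have sK: "s \<in> K" using snoc by auto
  have uS: "set u \<subseteq> S" using ul KS by auto
  have wrS: "set (walk_word c j) \<subseteq> S" if "j \<le> L" for j using walk_word_set[OF ok that] KS by auto
  have ws: "cox_rel S m (w @ [s]) (u @ walk_word c l @ [s])"
    using cox_rel_app_right[OF ul(3), of "[s]"] sK KS by auto
  consider (step_on) "l < L \<and> s = c l" | (step_back) "0 < l \<and> s = c (l-1)"
    | (exchange) "(l < L \<longrightarrow> s \<noteq> c l) \<and> (0 < l \<longrightarrow> s \<noteq> c (l-1))"
    by blast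
  then show ?case
  proof cases
    case step_on
    then show ?thesis using ws ul by (intro exI[of _ u] exI[of _ "Suc l"]) (auto simp: walk_word_Suc)
  next
    case step_back
    then obtain l' where l': "l = Suc l'" "s = c l'" by (cases l) auto
    have "cox_rel S m ((u @ walk_word c l') @ [s, s] @ []) ((u @ walk_word c l') @ [])"
      by (rule cox_rel.invol) (use sK KS uS wrS l' ul in auto)
    then have "cox_rel S m (u @ walk_word c l @ [s]) (u @ walk_word c l')"
      using l' by (simp add: walk_word_Suc)
    then show ?thesis using ws ul l' by (intro exI[of _ u] exI[of _ l']) (auto intro: cox_rel.trans)
  next
    case exchange
    obtain s' where s': "s' \<in> K - {c 0}" "cox_rel S m (walk_word c l @ [s]) ([s'] @ walk_word c l)"
      using walk_exchange[OF ok ul(2) sK] exchange by auto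
    have "cox_rel S m (u @ (walk_word c l @ [s])) (u @ ([s'] @ walk_word c l))"
      using cox_rel_app_left[OF s'(2) uS] .
    then have "cox_rel S m (w @ [s]) ((u @ [s']) @ walk_word c l)" using ws by (auto intro: cox_rel.trans)
    then show ?thesis using ul s' by (intro exI[of _ "u @ [s']"] exI[of _ l]) auto
  qed
qed

lemma coset_walk_finite:
  assumes ok: "coset_walk S m K c L"
    and fin: "finite X" and X: "\<forall>x\<in>X. set x \<subseteq> K - {c 0}"
    and cov: "\<forall>w. set w \<subseteq> K - {c 0} \<longrightarrow> (\<exists>x\<in>X. cox_rel S m w x)"
  shows "\<exists>Y. finite Y \<and> (\<forall>y\<in>Y. set y \<subseteq> K) \<and> (\<forall>w. set w \<subseteq> K \<longrightarrow> (\<exists>y\<in>Y. cox_rel S m w y))"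
proof (intro exI conjI allI impI)
  let ?Y = "(\<lambda>(u,l). u @ walk_word c l) ` (X \<times> {..L})"
  show "finite ?Y" using fin by simp
  show "\<forall>y\<in>?Y. set y \<subseteq> K" using X walk_word_set[OF ok] by fastforce
  have KS: "K \<subseteq> S" using coset_walk_subset[OF ok] .
  fix w assume "set w \<subseteq> K"
  then obtain u l where ul: "set u \<subseteq> K - {c 0}" "l \<le> L" "cox_rel S m w (u @ walk_word c l)"
    using walk_cosets[OF ok] by blast
  obtain x where x: "x \<in> X" "cox_rel S m u x" using cov ul(1) by blast
  have "cox_rel S m (u @ walk_word c l) (x @ walk_word c l)"
    using cox_rel_app_right[OF x(2)] walk_word_set[OF ok ul(2)] KS by auto
  then show "\<exists>y\<in>?Y. cox_rel S m w y" using x ul by (auto intro: cox_rel.trans)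
qed

lemma B_mat_eq: "1 \<le> n \<Longrightarrow> B_mat n i j = (if (i = n-1 \<and> j = n) \<or> (i = n \<and> j = n-1) then 4
    else if i+1 = j \<or> j+1 = i then 3 else 2)"
  unfolding B_mat_def adjacent_def by (auto simp: doubleton_eq_iff)

lemma B_mat_ne2: "1 \<le> n \<Longrightarrow> B_mat n s t \<noteq> 2 \<longleftrightarrow> (s+1 = t \<or> t+1 = s)"
  by (simp add: B_mat_eq)

lemma B_mat_adjacent: "1 \<le> n \<Longrightarrow> s+1 = t \<or> t+1 = s \<Longrightarrow> B_mat n s t = 3 \<or> B_mat n s t = 4"
  by (simp add: B_mat_eq)

lemma B_mat_4: "1 \<le> n \<Longrightarrow> B_mat n s t = 4 \<longleftrightarrow> ((s = n-1 \<and> t = n) \<or> (s = n \<and> t = n-1))"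
  by (simp add: B_mat_eq)

lemma B_mat_sym: "B_mat n s t = B_mat n t s"
  unfolding B_mat_def adjacent_def by (auto simp: insert_commute)

definition zigzag :: "nat \<Rightarrow> nat \<Rightarrow> nat \<Rightarrow> nat" where
  "zigzag k d p = (if p \<le> d then k + p else k + 2*d - p)"

lemma zigzag_adj: "l + 1 < 2*d+1 \<Longrightarrow> zigzag k d (l+1) = zigzag k d l + 1 \<or> zigzag k d l = zigzag k d (l+1) + 1"
  unfolding zigzag_def by (cases "l + 1 \<le> d"; cases "l \<le> d") auto

lemma zigzag_range: "l < 2*d+1 \<Longrightarrow> k \<le> zigzag k d l \<and> zigzag k d l \<le> k + d"
  unfolding zigzag_def by auto

lemma zigzag_nbrs: "l < 2*d+1 \<Longrightarrow> k \<le> s \<Longrightarrow> s \<le> k + d \<Longrightarrow> (s = zigzag k d l + 1 \<or> s + 1 = zigzag k d l) \<Longrightarrow>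
    0 < l \<and> s = zigzag k d (l-1) \<or> l+1 < 2*d+1 \<and> s = zigzag k d (l+1)"
  unfolding zigzag_def by (cases "l + 1 \<le> d"; cases "l \<le> d"; cases "l = 0") auto

lemma zigzag_turn: "0 < p \<Longrightarrow> p + 1 < 2*d+1 \<Longrightarrow> zigzag k d (p-1) = zigzag k d (p+1) \<Longrightarrow> p = d"
  unfolding zigzag_def by (cases "p + 1 \<le> d"; cases "p \<le> d") (auto split: if_split_asm)

lemma zigzag_max: "p < 2*d+1 \<Longrightarrow> zigzag k d p = k + d \<Longrightarrow> p = d"
  unfolding zigzag_def by (auto split: if_split_asm)

lemma zigzag_up: "p \<le> d \<Longrightarrow> zigzag k d p = k + p"
  by (simp add: zigzag_def)

lemma zigzag_down: "e \<le> d \<Longrightarrow> zigzag k d (d + e) = k + d - e"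
  by (simp add: zigzag_def add.commute)

text \<open>The zigzag from k to n and back is a coset walk in B_n: its only turn happens after the
  4-edge {n-1, n}.\<close>
context
  fixes n k d :: nat
  assumes n: "2 \<le> n" and k: "1 \<le> k" and nd: "n = k + d"
begin

private lemma zz_steps: "\<forall>l. l + 1 < 2*d+1 \<longrightarrow> zigzag k d l \<noteq> zigzag k d (l+1) \<and>
   (B_mat n (zigzag k d l) (zigzag k d (l+1)) = 3 \<or> B_mat n (zigzag k d l) (zigzag k d (l+1)) = 4)"
proof (intro allI impI)
  fix l assume "l + 1 < 2*d+1"
  then have "zigzag k d l + 1 = zigzag k d (l+1) \<or> zigzag k d (l+1) + 1 = zigzag k d l"
    using zigzag_adj[of l d k] by auto
  with B_mat_adjacent[OF _ this] n
  show "zigzag k d l \<noteq> zigzag k d (l+1) \<and>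
    (B_mat n (zigzag k d l) (zigzag k d (l+1)) = 3 \<or> B_mat n (zigzag k d l) (zigzag k d (l+1)) = 4)"
    by auto
qed

private lemma zz_nbrs: "\<forall>l<2*d+1. \<forall>s\<in>{k..n}. s \<noteq> zigzag k d l \<longrightarrow>
    B_mat n s (zigzag k d l) \<noteq> 2 \<longrightarrow>
    (0 < l \<and> s = zigzag k d (l-1)) \<or> (l+1 < 2*d+1 \<and> s = zigzag k d (l+1))"
proof (intro allI impI ballI)
  fix l s assume l: "l < 2*d+1" and s: "s \<in> {k..n}" and "s \<noteq> zigzag k d l"
    and "B_mat n s (zigzag k d l) \<noteq> 2"
  then have "s + 1 = zigzag k d l \<or> zigzag k d l + 1 = s" using B_mat_ne2[of n] n by simp
  then show "(0 < l \<and> s = zigzag k d (l-1)) \<or> (l+1 < 2*d+1 \<and> s = zigzag k d (l+1))"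
    using zigzag_nbrs[OF l, of k s] s nd by auto
qed

private lemma zz_no_turn3: "\<forall>p. p + 2 < 2*d+1 + 1 \<longrightarrow> B_mat n (zigzag k d p) (zigzag k d (p+1)) = 3 \<longrightarrow>
    0 < p \<longrightarrow> zigzag k d (p-1) \<noteq> zigzag k d (p+1)"
proof (intro allI impI notI)
  fix p assume p: "p + 2 < 2*d+1 + 1" and m3: "B_mat n (zigzag k d p) (zigzag k d (p+1)) = 3"
    and p0: "0 < p" and e: "zigzag k d (p-1) = zigzag k d (p+1)"
  have pd: "p = d" using zigzag_turn[OF p0 _ e] p by simp
  have "zigzag k d p = n" using pd nd zigzag_up[of p d k] by simp
  moreover have "zigzag k d (p+1) = n - 1" using pd nd zigzag_down[of 1 d k] p0 by simp
  ultimately show False using m3 B_mat_4[of n n "n-1"] n by simp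
qed

private lemma zz_turn4: "\<forall>p. p + 1 < 2*d+1 \<longrightarrow> B_mat n (zigzag k d p) (zigzag k d (p+1)) = 4 \<longrightarrow>
    \<not> (p + 2 < 2*d+1 \<and> zigzag k d (p+2) = zigzag k d p) \<longrightarrow>
    (0 < p \<and> zigzag k d (p-1) = zigzag k d (p+1) \<and> (1 < p \<longrightarrow> zigzag k d (p-2) \<noteq> zigzag k d p))"
proof (intro allI impI)
  fix p assume p: "p + 1 < 2*d+1" and m4: "B_mat n (zigzag k d p) (zigzag k d (p+1)) = 4"
    and nc: "\<not> (p + 2 < 2*d+1 \<and> zigzag k d (p+2) = zigzag k d p)"
  have "(zigzag k d p = n-1 \<and> zigzag k d (p+1) = n) \<or> (zigzag k d p = n \<and> zigzag k d (p+1) = n-1)"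
    using m4 B_mat_4[of n] n by simp
  then show "0 < p \<and> zigzag k d (p-1) = zigzag k d (p+1) \<and> (1 < p \<longrightarrow> zigzag k d (p-2) \<noteq> zigzag k d p)"
  proof
    assume "zigzag k d p = n-1 \<and> zigzag k d (p+1) = n"
    then have "p + 1 = d" using zigzag_max[of "p+1" d k] p nd by simp
    then have "p + 2 < 2*d+1 \<and> zigzag k d (p+2) = zigzag k d p"
      using zigzag_up[of p d k] zigzag_down[of 1 d k] by (simp add: numeral_2_eq_2)
    with nc show ?thesis by blast
  next
    assume "zigzag k d p = n \<and> zigzag k d (p+1) = n-1"
    then have pd: "p = d" using zigzag_max[of p d k] p nd by simp
    then have d0: "0 < d" using p by simp
    have "zigzag k d (p-1) = k + d - 1" using zigzag_up[of "p-1" d k] pd d0 by simp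
    moreover have "zigzag k d (p+1) = k + d - 1" using zigzag_down[of 1 d k] pd d0 by simp
    moreover have "1 < p \<longrightarrow> zigzag k d (p-2) \<noteq> zigzag k d p"
      using zigzag_up[of "p-2" d k] zigzag_up[of p d k] pd by auto
    ultimately show ?thesis using pd d0 by simp
  qed
qed

lemma zigzag_coset_walk: "coset_walk {1..n} (B_mat n) {k..n} (zigzag k d) (2*d+1)"
proof -
  have "{k..n} \<subseteq> {1..n}" using k by auto
  moreover have "\<forall>l<2*d+1. zigzag k d l \<in> {k..n}" using zigzag_range[of _ d k] nd by auto
  moreover have "\<forall>a\<in>{1..n}. \<forall>b\<in>{1..n}. B_mat n a b = B_mat n b a" using B_mat_sym by blast
  ultimately show ?thesis unfolding coset_walk_def using zz_steps zz_nbrs zz_no_turn3 zz_turn4 by simp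
qed

end

text \<open>Induction on j: W({n+1-j..n}) has finitely many elements, by the coset walk for k = n-j.\<close>
lemma B_finite_cover:
  assumes n: "2 \<le> n"
  shows "j \<le> n \<Longrightarrow> \<exists>X. finite X \<and> (\<forall>x\<in>X. set x \<subseteq> {n+1-j..n}) \<and>
           (\<forall>w. set w \<subseteq> {n+1-j..n} \<longrightarrow> (\<exists>x\<in>X. cox_rel {1..n} (B_mat n) w x))"
proof (induction j)
  case 0
  show ?case
  proof (intro exI[of _ "{[]}"] conjI ballI allI impI)
    fix w assume "set w \<subseteq> {n+1-0..n}"
    then have "w = []" by (cases w) auto
    then show "\<exists>x\<in>{[]}. cox_rel {1..n} (B_mat n) w x" by (simp add: cox_rel.refl)
  qed auto
next
  case (Suc j)
  let ?k = "n - j"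
  have walk: "coset_walk {1..n} (B_mat n) {?k..n} (zigzag ?k j) (2*j+1)"
    by (rule zigzag_coset_walk) (use n Suc in auto)
  have K': "{?k..n} - {zigzag ?k j 0} = {n+1-j..n}" using Suc by (auto simp: zigzag_def)
  obtain X where X: "finite X" "\<forall>x\<in>X. set x \<subseteq> {n+1-j..n}"
    "\<forall>w. set w \<subseteq> {n+1-j..n} \<longrightarrow> (\<exists>x\<in>X. cox_rel {1..n} (B_mat n) w x)" using Suc by auto
  have "n + 1 - Suc j = ?k" using Suc by simp
  then show ?case using coset_walk_finite[OF walk X(1)] X(2,3) K' by simp
qed

lemma B_fin_type:
  assumes n: "2 \<le> n" and G: "\<Gamma> \<subseteq> {1..n}"
  shows "fin_type {1..n} (B_mat n) \<Gamma>"
proof -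
  obtain X where X: "finite X" "\<forall>w. set w \<subseteq> {1..n} \<longrightarrow> (\<exists>x\<in>X. cox_rel {1..n} (B_mat n) w x)"
    using B_finite_cover[OF n, of n] by auto
  have "parabolic {1..n} (B_mat n) \<Gamma> \<subseteq> cox_class {1..n} (B_mat n) ` X"
  proof
    fix C assume "C \<in> parabolic {1..n} (B_mat n) \<Gamma>"
    then obtain w where w: "set w \<subseteq> \<Gamma>" "C = cox_class {1..n} (B_mat n) w" by (auto simp: parabolic_def)
    then obtain x where "x \<in> X" "cox_rel {1..n} (B_mat n) w x" using X G by blast
    then show "C \<in> cox_class {1..n} (B_mat n) ` X" using w cox_class_eq by auto
  qed
  then show ?thesis unfolding fin_type_def using G X(1) finite_subset by blast
qed

section \<open>The folding of B~_n onto B_n\<close>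

definition kappa :: "nat \<Rightarrow> nat" where
  "kappa s = (if s \<le> 2 then 1 else s - 1)"

definition iota :: "nat \<Rightarrow> nat \<Rightarrow> nat" where
  "iota i a = (if a = 1 then i else a + 1)"

lemma kappa_range: "2 \<le> n \<Longrightarrow> s \<in> {1..n+1} \<Longrightarrow> kappa s \<in> {1..n}"
  by (auto simp: kappa_def)

lemma kappa_eq_n: "2 \<le> n \<Longrightarrow> s \<in> {1..n+1} \<Longrightarrow> kappa s = n \<longleftrightarrow> s = n + 1"
  by (auto simp: kappa_def)

lemma Bt_edge_kappa:
  assumes s: "s \<in> {1..n+1}" and t: "t \<in> {1..n+1}" and ne: "kappa s \<noteq> kappa t"
  shows "Bt_edge n s t \<longleftrightarrow> (kappa s + 1 = kappa t \<or> kappa t + 1 = kappa s)"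
proof
  assume "Bt_edge n s t"
  then consider "{s,t} = {1,3}" | "{s,t} = {2,3}" | k where "3 \<le> k" "k \<le> n" "{s,t} = {k,k+1}"
    unfolding Bt_edge_def by blast
  then show "kappa s + 1 = kappa t \<or> kappa t + 1 = kappa s"
    by cases (auto simp: doubleton_eq_iff kappa_def)
next
  have dir: "Bt_edge n a b" if a: "a \<in> {1..n+1}" and b: "b \<in> {1..n+1}" and e: "kappa a + 1 = kappa b"
    for a b
  proof (cases "a \<le> 2")
    case True
    then have "b = 3" using e by (auto simp: kappa_def split: if_splits)
    then show ?thesis using True a unfolding Bt_edge_def by (auto simp: doubleton_eq_iff)
  next
    case False
    then have "b = a + 1" using e by (auto simp: kappa_def split: if_splits)
    then show ?thesis using False b unfolding Bt_edge_def by (intro disjI2) (auto intro!: exI[of _ a])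
  qed
  assume "kappa s + 1 = kappa t \<or> kappa t + 1 = kappa s"
  then show "Bt_edge n s t"
    using dir[OF s t] dir[OF t s] unfolding Bt_edge_def by (auto simp: insert_commute)
qed

lemma Bt_mat_kappa:
  assumes n: "2 \<le> n" and s: "s \<in> {1..n+1}" and t: "t \<in> {1..n+1}" and ne: "kappa s \<noteq> kappa t"
  shows "B_mat n (kappa s) (kappa t) = Bt_mat n s t"
proof -
  have E: "Bt_edge n s t \<longleftrightarrow> (kappa s + 1 = kappa t \<or> kappa t + 1 = kappa s)"
    by (rule Bt_edge_kappa[OF s t ne])
  have fs: "kappa s \<in> {1..n}" and ft: "kappa t \<in> {1..n}" using kappa_range[OF n] s t by auto
  have ns: "kappa s = n \<longleftrightarrow> s = n+1" and nt: "kappa t = n \<longleftrightarrow> t = n+1" using kappa_eq_n[OF n] s t by auto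
  show ?thesis
  proof (cases "Bt_edge n s t")
    case True
    then have adj: "kappa s + 1 = kappa t \<or> kappa t + 1 = kappa s" using E by simp
    have "(n + 1 = s \<or> n + 1 = t) \<longleftrightarrow> ((kappa s = n-1 \<and> kappa t = n) \<or> (kappa s = n \<and> kappa t = n-1))"
      using adj ns nt fs ft by auto
    then show ?thesis using True adj n by (simp add: Bt_mat_def B_mat_eq)
  next
    case False
    then show ?thesis using E n by (auto simp: Bt_mat_def B_mat_eq)
  qed
qed

lemma folding_iota: "2 \<le> n \<Longrightarrow> i \<in> {1,2} \<Longrightarrow> folding {1..n} (B_mat n) {1..n+1} (Bt_mat n) (iota i) kappa"
  unfolding folding_def using Bt_mat_kappa kappa_range by (auto simp: iota_def kappa_def)

lemma eta_Bt_kappa: "2 \<le> n \<Longrightarrow> \<forall>s\<in>{1..n+1}. eta_Bt n s = eta_B n (kappa s)"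
  using kappa_eq_n by (auto simp: eta_Bt_def eta_B_def)

text \<open>Every edge at n has the even label 4, so {n} is odd-closed and the weight eta_B
  (-t on n, -q elsewhere) of reduced words is well defined.\<close>
lemma weight_well_defined_B: "2 \<le> n \<Longrightarrow> weight_well_defined {1..n} (B_mat n) (eta_B n)"
proof (rule weight_well_defined_two_values)
  assume "2 \<le> n"
  then show "odd_closed {1..n} (B_mat n) {n}"
    by (auto simp: odd_closed_def B_mat_eq split: if_splits)
qed (auto simp: eta_B_def)

lemma fin_type_iota:
  "2 \<le> n \<Longrightarrow> i \<in> {1,2} \<Longrightarrow> \<Gamma> \<subseteq> {1..n} \<Longrightarrow> fin_type {1..n+1} (Bt_mat n) (iota i ` \<Gamma>)"
  using folding_transport(1)[OF folding_iota eta_Bt_kappa weight_well_defined_B] B_fin_type by auto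

lemma poincare_iota:
  "2 \<le> n \<Longrightarrow> i \<in> {1,2} \<Longrightarrow> \<Gamma> \<subseteq> {1..n} \<Longrightarrow>
   poincare {1..n+1} (Bt_mat n) (eta_Bt n) (iota i ` \<Gamma>) = poincare {1..n} (B_mat n) (eta_B n) \<Gamma>"
  using folding_transport(2)[OF folding_iota eta_Bt_kappa weight_well_defined_B] by auto

lemma iota_inj: "i \<in> {1,2} \<Longrightarrow> inj_on (iota i) {1..n}"
  by (auto simp: inj_on_def iota_def)

lemma iota_less_iff: "i \<in> {1,2} \<Longrightarrow> a \<in> {1..n} \<Longrightarrow> b \<in> {1..n} \<Longrightarrow> iota i a < iota i b \<longleftrightarrow> a < b"
  by (auto simp: iota_def)

lemma iota_image_range: "i \<in> {1,2} \<Longrightarrow> \<Gamma> \<subseteq> {1..n} \<Longrightarrow> iota i ` \<Gamma> \<subseteq> {1..n+1}"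
  by (auto simp: iota_def)

lemma card_iota_image: "i \<in> {1,2} \<Longrightarrow> \<Gamma> \<subseteq> {1..n} \<Longrightarrow> card (iota i ` \<Gamma>) = card \<Gamma>"
  using card_image[OF inj_on_subset[OF iota_inj]] by blast

lemma kappa_iota_image: "i \<in> {1,2} \<Longrightarrow> \<Gamma> \<subseteq> {1..n} \<Longrightarrow> kappa ` iota i ` \<Gamma> = \<Gamma>"
proof -
  assume i: "i \<in> {1,2}" and G: "\<Gamma> \<subseteq> {1..n}"
  have "kappa (iota i a) = a" if "a \<in> \<Gamma>" for a using that i G by (auto simp: kappa_def iota_def)
  then show ?thesis by (force simp: image_image)
qed

lemma other_leg_notin_iota: "i \<in> {1,2} \<Longrightarrow> \<Gamma> \<subseteq> {1..n} \<Longrightarrow> 3 - i \<notin> iota i ` \<Gamma>"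
  by (auto simp: iota_def)

lemma leg_in_iota_iff: "i \<in> {1,2} \<Longrightarrow> \<Gamma> \<subseteq> {1..n} \<Longrightarrow> i \<in> iota i ` \<Gamma> \<longleftrightarrow> 1 \<in> \<Gamma>"
  by (force simp: iota_def)

lemma iota_same: "1 \<notin> \<Gamma> \<Longrightarrow> iota 1 ` \<Gamma> = iota 2 ` \<Gamma>"
  by (rule image_cong) (auto simp: iota_def)

lemma iota_kappa_image: "i \<in> {1,2} \<Longrightarrow> \<Delta> \<subseteq> {1..n+1} \<Longrightarrow> 3 - i \<notin> \<Delta> \<Longrightarrow> iota i ` kappa ` \<Delta> = \<Delta>"
proof -
  assume i: "i \<in> {1,2}" and D: "\<Delta> \<subseteq> {1..n+1}" "3 - i \<notin> \<Delta>"
  have "iota i (kappa s) = s" if s: "s \<in> \<Delta>" for s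
  proof -
    have "1 \<le> s" "s \<noteq> 3 - i" using s D by auto
    then show ?thesis using i by (auto simp: iota_def kappa_def)
  qed
  then show ?thesis by (force simp: image_image)
qed

lemma kappa_image_range: "2 \<le> n \<Longrightarrow> \<Delta> \<subseteq> {1..n+1} \<Longrightarrow> kappa ` \<Delta> \<subseteq> {1..n}"
  using kappa_range by blast

lemma iota_insert_legs: "1 \<in> \<Gamma> \<Longrightarrow> insert 2 (iota 1 ` \<Gamma>) = insert 1 (iota 2 ` \<Gamma>)"
  by (force simp: iota_def)

lemma iota_full: "2 \<le> n \<Longrightarrow> i \<in> {1,2} \<Longrightarrow> iota i ` {1..n} = {1..n+1} - {3 - i}"
proof
  assume n: "2 \<le> n" and i: "i \<in> {1,2}"
  show "iota i ` {1..n} \<subseteq> {1..n+1} - {3 - i}"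
    using iota_image_range[OF i, of "{1..n}" n] other_leg_notin_iota[OF i, of "{1..n}" n] by blast
  show "{1..n+1} - {3 - i} \<subseteq> iota i ` {1..n}"
    using iota_kappa_image[OF i, of "{1..n+1} - {3 - i}" n] kappa_image_range[OF n, of "{1..n+1}"]
    by auto
qed

section \<open>The map beta\<close>

text \<open>The faces of B~_n on which beta x may be nonzero: those not containing both short legs.\<close>
definition admissible :: "nat \<Rightarrow> nat set \<Rightarrow> bool" where
  "admissible n \<Delta> \<longleftrightarrow> \<Delta> \<subseteq> {1..n+1} \<and> \<not> (1 \<in> \<Delta> \<and> 2 \<in> \<Delta>)"

lemma beta_e_iota:
  assumes G: "\<Gamma> \<subseteq> {1..n}"
  shows "beta_e \<Gamma> \<Theta> = (if \<Theta> = iota 1 ` \<Gamma> then 1 else 0) + (if 1 \<in> \<Gamma> \<and> \<Theta> = iota 2 ` \<Gamma> then 1 else 0)"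
proof -
  have sp: "shift_plus \<Gamma> = iota i ` (\<Gamma> - {1})" for i
    unfolding shift_plus_def using G by (intro image_cong) (auto simp: iota_def)
  have ins: "1 \<in> \<Gamma> \<Longrightarrow> insert i (shift_plus \<Gamma>) = iota i ` \<Gamma>" for i
    unfolding sp[of i] by (auto simp: iota_def)
  show ?thesis
  proof (cases "1 \<in> \<Gamma>")
    case True
    then show ?thesis using ins[of 1] ins[of 2] by (simp add: beta_e_def ind_def)
  next
    case False
    then have "shift_plus \<Gamma> = iota 1 ` \<Gamma>" using sp[of 1] by simp
    then show ?thesis using False by (simp add: beta_e_def ind_def)
  qed
qed

lemma lifts_iff_admissible:
  assumes n: "2 \<le> n" and G: "\<Gamma> \<subseteq> {1..n}"
  shows "(\<Theta> = iota 1 ` \<Gamma> \<or> (1 \<in> \<Gamma> \<and> \<Theta> = iota 2 ` \<Gamma>)) \<longleftrightarrow> (admissible n \<Theta> \<and> \<Gamma> = kappa ` \<Theta>)"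
proof
  assume "\<Theta> = iota 1 ` \<Gamma> \<or> (1 \<in> \<Gamma> \<and> \<Theta> = iota 2 ` \<Gamma>)"
  then obtain i where i: "i \<in> {1,2}" "\<Theta> = iota i ` \<Gamma>" by blast
  have "3 - i \<notin> \<Theta>" and "3 - i = 1 \<or> 3 - i = 2"
    using other_leg_notin_iota[OF i(1) G] i by auto
  then have "\<not> (1 \<in> \<Theta> \<and> 2 \<in> \<Theta>)" by auto
  then show "admissible n \<Theta> \<and> \<Gamma> = kappa ` \<Theta>"
    using iota_image_range[OF i(1) G] kappa_iota_image[OF i(1) G] i(2) by (simp add: admissible_def)
next
  assume c: "admissible n \<Theta> \<and> \<Gamma> = kappa ` \<Theta>"
  then have T: "\<Theta> \<subseteq> {1..n+1}" by (simp add: admissible_def)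
  show "\<Theta> = iota 1 ` \<Gamma> \<or> (1 \<in> \<Gamma> \<and> \<Theta> = iota 2 ` \<Gamma>)"
  proof (cases "2 \<in> \<Theta>")
    case False
    then show ?thesis using iota_kappa_image[of 1 \<Theta> n] T c by simp
  next
    case True
    have "kappa 2 \<in> kappa ` \<Theta>" using True by (rule imageI)
    then have "1 \<in> \<Gamma>" using c by (simp add: kappa_def)
    moreover have "1 \<notin> \<Theta>" using c True by (simp add: admissible_def)
    ultimately show ?thesis using iota_kappa_image[of 2 \<Theta> n] T c by simp
  qed
qed

lemma lifts_distinct: "\<Gamma> \<subseteq> {1..n} \<Longrightarrow> 1 \<in> \<Gamma> \<Longrightarrow> iota 1 ` \<Gamma> \<noteq> iota 2 ` \<Gamma>"
  using leg_in_iota_iff[of 1 \<Gamma> n] other_leg_notin_iota[of 2 \<Gamma> n] by auto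

lemma beta_eval:
  assumes n: "2 \<le> n"
  shows "beta n x \<Delta> = (if admissible n \<Delta> then x (kappa ` \<Delta>) else 0)"
proof -
  have "beta_e \<Gamma> \<Delta> = (if admissible n \<Delta> \<and> \<Gamma> = kappa ` \<Delta> then 1 else 0)" if G: "\<Gamma> \<subseteq> {1..n}" for \<Gamma>
  proof -
    have "beta_e \<Gamma> \<Delta> = (if \<Delta> = iota 1 ` \<Gamma> \<or> (1 \<in> \<Gamma> \<and> \<Delta> = iota 2 ` \<Gamma>) then 1 else 0)"
      using beta_e_iota[OF G, of \<Delta>] lifts_distinct[OF G] by (cases "1 \<in> \<Gamma>") auto
    then show ?thesis by (simp only: lifts_iff_admissible[OF n G])
  qed
  then have "beta n x \<Delta> = (\<Sum>\<Gamma>\<in>Pow {1..n}. if \<Gamma> = kappa ` \<Delta> then (if admissible n \<Delta> then x \<Gamma> else 0) else 0)"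
    unfolding beta_def by (intro sum.cong) simp_all
  also have "\<dots> = (if admissible n \<Delta> then x (kappa ` \<Delta>) else 0)"
    using kappa_image_range[OF n] by (auto simp: admissible_def sum.delta)
  finally show ?thesis .
qed

lemma beta_e_sum:
  assumes "finite F" and G: "\<Gamma> \<subseteq> {1..n}"
  shows "(\<Sum>\<Theta>\<in>F. beta_e \<Gamma> \<Theta> * h \<Theta>) =
     (if iota 1 ` \<Gamma> \<in> F then h (iota 1 ` \<Gamma>) else (0::R))
   + (if 1 \<in> \<Gamma> \<and> iota 2 ` \<Gamma> \<in> F then h (iota 2 ` \<Gamma>) else 0)"
proof -
  have "(\<Sum>\<Theta>\<in>F. beta_e \<Gamma> \<Theta> * h \<Theta>) = (\<Sum>\<Theta>\<in>F. if \<Theta> = iota 1 ` \<Gamma> then h \<Theta> else 0)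
      + (\<Sum>\<Theta>\<in>F. if 1 \<in> \<Gamma> \<and> \<Theta> = iota 2 ` \<Gamma> then h \<Theta> else 0)"
    unfolding sum.distrib[symmetric] by (rule sum.cong) (auto simp: beta_e_iota[OF G])
  then show ?thesis using assms(1) by (cases "1 \<in> \<Gamma>") (simp_all add: sum.delta)
qed

section \<open>Salvetti coefficients along the sections\<close>

abbreviation coef_B :: "nat \<Rightarrow> nat set \<Rightarrow> nat set \<Rightarrow> R" where
  "coef_B n \<equiv> salvetti_coef {1..n} (B_mat n) (eta_B n)"

abbreviation coef_Bt :: "nat \<Rightarrow> nat set \<Rightarrow> nat set \<Rightarrow> R" where
  "coef_Bt n \<equiv> salvetti_coef (St n) (Bt_mat n) (eta_Bt n)"

lemma salvetti_coef_not_subset: "\<not> \<Theta> \<subseteq> \<Delta> \<Longrightarrow> salvetti_coef S m \<eta> \<Theta> \<Delta> = 0"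
  by (simp add: salvetti_coef_def)

lemma salvetti_coef_outside: "\<not> \<Delta> \<subseteq> S \<Longrightarrow> salvetti_coef S m \<eta> \<Theta> \<Delta> = 0"
  by (simp add: salvetti_coef_def fin_type_def)

lemma salvetti_coef_insert: "x \<notin> \<Theta> \<Longrightarrow> salvetti_coef S m \<eta> \<Theta> (insert x \<Theta>) =
   (if fin_type S m \<Theta> \<and> fin_type S m (insert x \<Theta>) then (-1) ^ alpha \<Theta> x *
      rdiv (poincare S m \<eta> (insert x \<Theta>)) (poincare S m \<eta> \<Theta>) else 0)"
proof -
  assume "x \<notin> \<Theta>"
  then have "insert x \<Theta> - \<Theta> = {x}" by auto
  then show ?thesis by (auto simp: salvetti_coef_def)
qed

lemma salvetti_coef_relabel:
  assumes inj: "inj_on ph A" and mono: "\<forall>a\<in>A. \<forall>b\<in>A. ph a < ph b \<longleftrightarrow> a < b"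
    and fin: "\<forall>\<Gamma>\<subseteq>A. fin_type S' m' (ph ` \<Gamma>) = fin_type A m \<Gamma>"
    and P: "\<forall>\<Gamma>\<subseteq>A. poincare S' m' \<eta>' (ph ` \<Gamma>) = poincare A m \<eta> \<Gamma>"
    and G: "\<Gamma> \<subseteq> A" and G': "\<Gamma>' \<subseteq> A"
  shows "salvetti_coef S' m' \<eta>' (ph ` \<Gamma>) (ph ` \<Gamma>') = salvetti_coef A m \<eta> \<Gamma> \<Gamma>'"
proof -
  have sub: "ph ` \<Gamma> \<subseteq> ph ` \<Gamma>' \<longleftrightarrow> \<Gamma> \<subseteq> \<Gamma>'"
  proof
    assume "ph ` \<Gamma> \<subseteq> ph ` \<Gamma>'"
    then show "\<Gamma> \<subseteq> \<Gamma>'" using inj_on_image_mem_iff[OF inj _ G'] G by blast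
  qed auto
  have diff: "ph ` \<Gamma>' - ph ` \<Gamma> = ph ` (\<Gamma>' - \<Gamma>)" using inj_on_image_set_diff[OF inj, of \<Gamma>' \<Gamma>] G G' by auto
  have card: "card (ph ` (\<Gamma>' - \<Gamma>)) = card (\<Gamma>' - \<Gamma>)"
    using card_image[OF inj_on_subset[OF inj, of "\<Gamma>' - \<Gamma>"]] G' by auto
  show ?thesis
  proof (cases "fin_type A m \<Gamma> \<and> fin_type A m \<Gamma>' \<and> \<Gamma> \<subseteq> \<Gamma>' \<and> card (\<Gamma>' - \<Gamma>) = 1")
    case True
    then obtain x where x: "\<Gamma>' - \<Gamma> = {x}" by (meson card_1_singletonE)
    have xA: "x \<in> A" using x G' by auto
    have "{s \<in> ph ` \<Gamma>. s < ph x} = ph ` {s \<in> \<Gamma>. s < x}" using mono G xA by auto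
    moreover have "card (ph ` {s \<in> \<Gamma>. s < x}) = card {s \<in> \<Gamma>. s < x}"
      using card_image[OF inj_on_subset[OF inj, of "{s \<in> \<Gamma>. s < x}"]] G by auto
    ultimately have "alpha (ph ` \<Gamma>) (ph x) = alpha \<Gamma> x" by (simp add: alpha_def)
    then show ?thesis using True sub diff card fin P G G' x by (simp add: salvetti_coef_def)
  next
    case False
    then show ?thesis using sub diff card fin G G' by (auto simp: salvetti_coef_def)
  qed
qed

lemma coef_iota:
  assumes n: "2 \<le> n" and i: "i \<in> {1,2}" and G: "\<Gamma> \<subseteq> {1..n}" and G': "\<Gamma>' \<subseteq> {1..n}"
  shows "coef_Bt n (iota i ` \<Gamma>) (iota i ` \<Gamma>') = coef_B n \<Gamma> \<Gamma>'"
proof (rule salvetti_coef_relabel[OF iota_inj[OF i] _ _ _ G G'])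
  show "\<forall>a\<in>{1..n}. \<forall>b\<in>{1..n}. iota i a < iota i b \<longleftrightarrow> a < b" using iota_less_iff[OF i] by blast
qed (use fin_type_iota[OF n i] poincare_iota[OF n i] B_fin_type[OF n] in auto)

text \<open>The signs that make the two lifts of a face containing 1 cancel: inserting the missing
  leg 2 into iota 1 ` Gamma passes one smaller element, inserting 1 into iota 2 ` Gamma none.\<close>
lemma alpha_legs:
  assumes G: "\<Gamma> \<subseteq> {1..n}" and one: "1 \<in> \<Gamma>"
  shows "alpha (iota 1 ` \<Gamma>) 2 = 1" and "alpha (iota 2 ` \<Gamma>) 1 = 0"
proof -
  have "{s \<in> iota 1 ` \<Gamma>. s < 2} = {1}" using G one by (force simp: iota_def)
  then show "alpha (iota 1 ` \<Gamma>) 2 = 1" by (simp add: alpha_def)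
  have "{s \<in> iota 2 ` \<Gamma>. s < 1} = {}" using G by (auto simp: iota_def)
  then show "alpha (iota 2 ` \<Gamma>) 1 = 0" by (simp add: alpha_def)
qed

lemma lifts_coef_cancel:
  assumes n: "2 \<le> n" and G: "\<Gamma> \<subseteq> {1..n}" and one: "1 \<in> \<Gamma>"
  defines "E \<equiv> insert 2 (iota 1 ` \<Gamma>)"
  shows "coef_Bt n (iota 1 ` \<Gamma>) E + coef_Bt n (iota 2 ` \<Gamma>) E = 0"
proof -
  let ?PE = "poincare (St n) (Bt_mat n) (eta_Bt n) E" and ?P0 = "poincare {1..n} (B_mat n) (eta_B n) \<Gamma>"
  have E2: "E = insert 1 (iota 2 ` \<Gamma>)" using iota_insert_legs[OF one] by (simp add: E_def)
  have out1: "2 \<notin> iota 1 ` \<Gamma>" and out2: "1 \<notin> iota 2 ` \<Gamma>"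
    using other_leg_notin_iota[of 1 \<Gamma> n] other_leg_notin_iota[of 2 \<Gamma> n] G by auto
  have "coef_Bt n (iota 1 ` \<Gamma>) E = (if fin_type (St n) (Bt_mat n) E then - rdiv ?PE ?P0 else 0)"
    unfolding E_def using salvetti_coef_insert[OF out1, of "St n" "Bt_mat n" "eta_Bt n"]
      alpha_legs(1)[OF G one] poincare_iota[OF n _ G, of 1] fin_type_iota[OF n _ G, of 1] by simp
  moreover have "coef_Bt n (iota 2 ` \<Gamma>) E = (if fin_type (St n) (Bt_mat n) E then rdiv ?PE ?P0 else 0)"
    unfolding E2 using salvetti_coef_insert[OF out2, of "St n" "Bt_mat n" "eta_Bt n"]
      alpha_legs(2)[OF G one] poincare_iota[OF n _ G, of 2] fin_type_iota[OF n _ G, of 2] by simp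
  ultimately show ?thesis by simp
qed

lemma salvetti_coef_nonzero:
  "salvetti_coef S m \<eta> \<Theta> \<Delta> \<noteq> 0 \<Longrightarrow> \<exists>x. x \<notin> \<Theta> \<and> \<Delta> = insert x \<Theta>"
proof -
  assume "salvetti_coef S m \<eta> \<Theta> \<Delta> \<noteq> 0"
  then have sub: "\<Theta> \<subseteq> \<Delta>" and "card (\<Delta> - \<Theta>) = 1"
    by (auto simp: salvetti_coef_def split: if_splits)
  then obtain x where "\<Delta> - \<Theta> = {x}" by (meson card_1_singletonE)
  then show ?thesis using sub by blast
qed

text \<open>On an admissible face Delta exactly one lift of Gamma can be a facet of Delta, and it
  carries the coefficient of B_n.\<close>
lemma coef_identity_admissible:
  assumes n: "2 \<le> n" and G: "\<Gamma> \<subseteq> {1..n}" and D: "admissible n \<Delta>"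
  shows "coef_B n \<Gamma> (kappa ` \<Delta>) =
    coef_Bt n (iota 1 ` \<Gamma>) \<Delta> + (if 1 \<in> \<Gamma> then coef_Bt n (iota 2 ` \<Gamma>) \<Delta> else 0)"
proof -
  have DS: "\<Delta> \<subseteq> St n" and legs: "\<not> (1 \<in> \<Delta> \<and> 2 \<in> \<Delta>)" using D by (auto simp: admissible_def)
  have K: "kappa ` \<Delta> \<subseteq> {1..n}" using kappa_image_range[OF n DS] .
  show ?thesis
  proof (cases "2 \<in> \<Delta>")
    case False
    have "coef_Bt n (iota 1 ` \<Gamma>) \<Delta> = coef_B n \<Gamma> (kappa ` \<Delta>)"
      using coef_iota[OF n _ G K, of 1] iota_kappa_image[of 1 \<Delta> n] DS False by simp
    moreover have "1 \<in> \<Gamma> \<Longrightarrow> coef_Bt n (iota 2 ` \<Gamma>) \<Delta> = 0"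
      using leg_in_iota_iff[of 2 \<Gamma> n] G False by (intro salvetti_coef_not_subset) auto
    ultimately show ?thesis by simp
  next
    case True
    then have one: "1 \<notin> \<Delta>" using legs by simp
    have e: "coef_Bt n (iota 2 ` \<Gamma>) \<Delta> = coef_B n \<Gamma> (kappa ` \<Delta>)"
      using coef_iota[OF n _ G K, of 2] iota_kappa_image[of 2 \<Delta> n] DS one by simp
    show ?thesis
    proof (cases "1 \<in> \<Gamma>")
      case True
      have "coef_Bt n (iota 1 ` \<Gamma>) \<Delta> = 0"
        using leg_in_iota_iff[of 1 \<Gamma> n] G True one by (intro salvetti_coef_not_subset) auto
      then show ?thesis using e True by simp
    next
      case False
      then show ?thesis using e iota_same[OF False] by simp
    qed
  qed
qed

text \<open>On faces containing both legs the two lifts of a face containing 1 cancel, and no other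
  lift is a facet.\<close>
lemma coef_identity_both_legs:
  assumes n: "2 \<le> n" and G: "\<Gamma> \<subseteq> {1..n}" and legs: "1 \<in> \<Delta>" "2 \<in> \<Delta>"
  shows "coef_Bt n (iota 1 ` \<Gamma>) \<Delta> + (if 1 \<in> \<Gamma> then coef_Bt n (iota 2 ` \<Gamma>) \<Delta> else 0) = 0"
proof -
  let ?E = "insert 2 (iota 1 ` \<Gamma>)"
  have out1: "2 \<notin> iota 1 ` \<Gamma>" and out2: "1 \<notin> iota 2 ` \<Gamma>"
    using other_leg_notin_iota[of 1 \<Gamma> n] other_leg_notin_iota[of 2 \<Gamma> n] G by auto
  have z1: "coef_Bt n (iota 1 ` \<Gamma>) \<Delta> = 0" if "\<not> (1 \<in> \<Gamma> \<and> \<Delta> = ?E)"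
  proof (rule ccontr)
    assume "coef_Bt n (iota 1 ` \<Gamma>) \<Delta> \<noteq> 0"
    then obtain x where x: "x \<notin> iota 1 ` \<Gamma>" "\<Delta> = insert x (iota 1 ` \<Gamma>)"
      using salvetti_coef_nonzero by blast
    then have "x = 2" using legs out1 by auto
    then show False using x that legs leg_in_iota_iff[of 1 \<Gamma> n] G by auto
  qed
  have z2: "coef_Bt n (iota 2 ` \<Gamma>) \<Delta> = 0" if "\<Delta> \<noteq> ?E" and one: "1 \<in> \<Gamma>"
  proof (rule ccontr)
    assume "coef_Bt n (iota 2 ` \<Gamma>) \<Delta> \<noteq> 0"
    then obtain x where x: "x \<notin> iota 2 ` \<Gamma>" "\<Delta> = insert x (iota 2 ` \<Gamma>)"
      using salvetti_coef_nonzero by blast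
    then have "x = 1" using legs out2 by auto
    then show False using x that iota_insert_legs[OF one] by simp
  qed
  show ?thesis
    using z1 z2 lifts_coef_cancel[OF n G] by (cases "1 \<in> \<Gamma> \<and> \<Delta> = ?E") auto
qed

text \<open>The coefficient identity behind the chain-map property: the coefficient of e_Delta in
  d (beta e_Gamma) equals the coefficient of e_(kappa Delta) in d e_Gamma, transported to
  admissible faces.\<close>
lemma coef_identity:
  assumes n: "2 \<le> n" and G: "\<Gamma> \<subseteq> {1..n}"
  shows "(if admissible n \<Delta> then coef_B n \<Gamma> (kappa ` \<Delta>) else 0) =
    coef_Bt n (iota 1 ` \<Gamma>) \<Delta> + (if 1 \<in> \<Gamma> then coef_Bt n (iota 2 ` \<Gamma>) \<Delta> else 0)"
proof (cases "admissible n \<Delta>")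
  case True
  then show ?thesis using coef_identity_admissible[OF n G] by simp
next
  case False
  then consider "\<not> \<Delta> \<subseteq> St n" | "1 \<in> \<Delta>" "2 \<in> \<Delta>" by (auto simp: admissible_def)
  then show ?thesis
  proof cases
    case 1
    then show ?thesis using False by (simp add: salvetti_coef_outside)
  next
    case 2
    then show ?thesis using False coef_identity_both_legs[OF n G] by simp
  qed
qed

definition top_faces :: "nat \<Rightarrow> nat set set" where
  "top_faces n = {\<Theta>. \<Theta> \<subseteq> St n \<and> card \<Theta> = n}"

text \<open>The coefficient of e_S in d e_Theta for a top face Theta of the augmented complex.\<close>
definition aug_coef :: "nat \<Rightarrow> nat set \<Rightarrow> R" where
  "aug_coef n \<Theta> = (-1) ^ alpha \<Theta> (the_elem (St n - \<Theta>)) *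
     rdiv (What n) (poincare (St n) (Bt_mat n) (eta_Bt n) \<Theta>)"

lemma iota_top_face: "i \<in> {1,2} \<Longrightarrow> \<Gamma> \<subseteq> {1..n} \<Longrightarrow> iota i ` \<Gamma> \<in> top_faces n \<longleftrightarrow> \<Gamma> = {1..n}"
  using card_iota_image[of i \<Gamma> n] iota_image_range[of i \<Gamma> n]
    card_subset_eq[OF finite_atLeastAtMost, of \<Gamma> 1 n] by (auto simp: top_faces_def)

text \<open>Only the full face lifts to top faces, and its two lifts contribute opposite terms.\<close>
lemma aug_lifts_cancel:
  assumes n: "2 \<le> n" and G: "\<Gamma> \<subseteq> {1..n}"
  shows "(if iota 1 ` \<Gamma> \<in> top_faces n then aug_coef n (iota 1 ` \<Gamma>) else 0) +
         (if 1 \<in> \<Gamma> \<and> iota 2 ` \<Gamma> \<in> top_faces n then aug_coef n (iota 2 ` \<Gamma>) else 0) = 0"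
proof (cases "\<Gamma> = {1..n}")
  case False
  then show ?thesis using iota_top_face[OF _ G] by simp
next
  case True
  have one: "1 \<in> \<Gamma>" using True n by simp
  have "St n - iota 1 ` \<Gamma> = {2}" and "St n - iota 2 ` \<Gamma> = {1}"
    using True iota_full[OF n, of 1] iota_full[OF n, of 2] n by auto
  then show ?thesis using True iota_top_face[OF _ G] one alpha_legs[OF G one] poincare_iota[OF n _ G]
    by (simp add: aug_coef_def)
qed

section \<open>beta is a cochain map\<close>

lemma beta_pairing:
  assumes "finite F"
  shows "(\<Sum>\<Theta>\<in>F. beta n x \<Theta> * h \<Theta>) = (\<Sum>\<Gamma>\<in>Pow {1..n}. x \<Gamma> *
     ((if iota 1 ` \<Gamma> \<in> F then h (iota 1 ` \<Gamma>) else 0)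
    + (if 1 \<in> \<Gamma> \<and> iota 2 ` \<Gamma> \<in> F then h (iota 2 ` \<Gamma>) else 0)))"
proof -
  have "(\<Sum>\<Theta>\<in>F. beta n x \<Theta> * h \<Theta>) = (\<Sum>\<Theta>\<in>F. \<Sum>\<Gamma>\<in>Pow {1..n}. x \<Gamma> * (beta_e \<Gamma> \<Theta> * h \<Theta>))"
    by (simp add: beta_def sum_distrib_right mult.assoc)
  also have "\<dots> = (\<Sum>\<Gamma>\<in>Pow {1..n}. x \<Gamma> * (\<Sum>\<Theta>\<in>F. beta_e \<Gamma> \<Theta> * h \<Theta>))"
    by (subst sum.swap) (simp add: sum_distrib_left)
  finally show ?thesis using beta_e_sum[OF assms] by simp
qed

lemma fin_faces_B: "2 \<le> n \<Longrightarrow> {\<Gamma>. fin_type {1..n} (B_mat n) \<Gamma>} = Pow {1..n}"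
  using B_fin_type by (auto simp: fin_type_def)

lemma beta_salvetti_d:
  assumes n: "2 \<le> n"
  shows "beta n (salvetti_d {1..n} (B_mat n) (eta_B n) x) \<Delta> =
    (\<Sum>\<Gamma>\<in>Pow {1..n}. x \<Gamma> * (if admissible n \<Delta> then coef_B n \<Gamma> (kappa ` \<Delta>) else 0))"
  unfolding beta_eval[OF n] salvetti_d_def fin_faces_B[OF n] by (simp add: sum.neutral)

lemma salvetti_d_beta:
  assumes n: "2 \<le> n"
  shows "salvetti_d (St n) (Bt_mat n) (eta_Bt n) (beta n x) \<Delta> =
    (\<Sum>\<Gamma>\<in>Pow {1..n}. x \<Gamma> * (coef_Bt n (iota 1 ` \<Gamma>) \<Delta> + (if 1 \<in> \<Gamma> then coef_Bt n (iota 2 ` \<Gamma>) \<Delta> else 0)))"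
proof -
  let ?F = "{\<Theta>. fin_type (St n) (Bt_mat n) \<Theta>}"
  have fin: "finite ?F" by (rule finite_subset[of _ "Pow (St n)"]) (auto simp: fin_type_def)
  have "salvetti_d (St n) (Bt_mat n) (eta_Bt n) (beta n x) \<Delta> = (\<Sum>\<Theta>\<in>?F. beta n x \<Theta> * coef_Bt n \<Theta> \<Delta>)"
    by (simp add: salvetti_d_def)
  also have "\<dots> = (\<Sum>\<Gamma>\<in>Pow {1..n}. x \<Gamma> * ((if iota 1 ` \<Gamma> \<in> ?F then coef_Bt n (iota 1 ` \<Gamma>) \<Delta> else 0)
      + (if 1 \<in> \<Gamma> \<and> iota 2 ` \<Gamma> \<in> ?F then coef_Bt n (iota 2 ` \<Gamma>) \<Delta> else 0)))"
    by (rule beta_pairing[OF fin])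
  also have "\<dots> = (\<Sum>\<Gamma>\<in>Pow {1..n}. x \<Gamma> *
      (coef_Bt n (iota 1 ` \<Gamma>) \<Delta> + (if 1 \<in> \<Gamma> then coef_Bt n (iota 2 ` \<Gamma>) \<Delta> else 0)))"
    using fin_type_iota[OF n] by (intro sum.cong) auto
  finally show ?thesis .
qed

text \<open>The augmentation term of dhat (written as in its definition) vanishes on the image of beta.\<close>
lemma augmentation_beta:
  assumes n: "2 \<le> n"
  shows "(\<Sum>\<Theta>\<in>{\<Gamma>. \<Gamma> \<subseteq> St n \<and> card \<Gamma> = n}. beta n x \<Theta> * ((-1) ^ alpha \<Theta> (the_elem (St n - \<Theta>)) *
           rdiv (What n) (poincare (St n) (Bt_mat n) (eta_Bt n) \<Theta>))) = 0"
proof -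
  have "finite (top_faces n)" by (rule finite_subset[of _ "Pow (St n)"]) (auto simp: top_faces_def)
  then show ?thesis
    using beta_pairing[of "top_faces n" n x "aug_coef n"] aug_lifts_cancel[OF n]
    by (simp add: top_faces_def aug_coef_def)
qed

lemma beta_chain_map:
  assumes n: "2 \<le> n"
  shows "beta n (salvetti_d {1..n} (B_mat n) (eta_B n) x) = dhat n (beta n x)"
proof
  fix \<Delta>
  have "dhat n (beta n x) \<Delta> = salvetti_d (St n) (Bt_mat n) (eta_Bt n) (beta n x) \<Delta>"
    unfolding dhat_def using augmentation_beta[OF n] by simp
  also have "\<dots> = beta n (salvetti_d {1..n} (B_mat n) (eta_B n) x) \<Delta>"
    unfolding salvetti_d_beta[OF n] beta_salvetti_d[OF n] by (intro sum.cong) (simp_all add: coef_identity[OF n])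
  finally show "beta n (salvetti_d {1..n} (B_mat n) (eta_B n) x) \<Delta> = dhat n (beta n x) \<Delta>" ..
qed

section \<open>The sigma-invariant subcomplex\<close>

definition swap_legs :: "nat \<Rightarrow> nat" where
  "swap_legs i = (if i = 1 then 2 else if i = 2 then 1 else i)"

lemma swap12_eq: "swap12 X = swap_legs ` X"
  by (simp add: swap12_def swap_legs_def)

lemma swap_legs_swap_legs [simp]: "swap_legs (swap_legs i) = i"
  by (simp add: swap_legs_def)

lemma swap12_mem: "k \<in> swap12 X \<longleftrightarrow> swap_legs k \<in> X"
  unfolding swap12_eq by (metis image_iff swap_legs_swap_legs)

lemma swap12_legs: "1 \<in> swap12 X \<longleftrightarrow> 2 \<in> X" "2 \<in> swap12 X \<longleftrightarrow> 1 \<in> X"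
  by (simp_all add: swap12_mem swap_legs_def)

lemma swap12_swap12: "swap12 (swap12 X) = X"
  by (auto simp: swap12_mem)

lemma swap12_fixed:
  assumes "(1 \<in> X) = (2 \<in> X)"
  shows "swap12 X = X"
proof (cases "1 \<in> X")
  case True
  then have "2 \<in> X" using assms by blast
  then show ?thesis using True by (auto simp: swap12_mem swap_legs_def split: if_splits)
next
  case False
  then have "2 \<notin> X" using assms by blast
  then show ?thesis using False by (auto simp: swap12_mem swap_legs_def split: if_splits)
qed

lemma swap12_subset: "1 \<le> n \<Longrightarrow> X \<subseteq> St n \<Longrightarrow> swap12 X \<subseteq> St n"
  unfolding swap12_eq swap_legs_def by auto

lemma kappa_swap12: "kappa ` swap12 X = kappa ` X"
proof -
  have "kappa ` swap_legs ` X = (\<lambda>i. kappa (swap_legs i)) ` X" by (simp add: image_image)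
  also have "\<dots> = kappa ` X" by (rule image_cong) (auto simp: swap_legs_def kappa_def)
  finally show ?thesis by (simp add: swap12_eq)
qed

lemma sigma_eval:
  assumes n1: "1 \<le> n" and D: "\<Delta> \<subseteq> St n"
  shows "sigma n y \<Delta> = (if 1 \<in> \<Delta> \<and> 2 \<in> \<Delta> then - y \<Delta> else y (swap12 \<Delta>))"
proof -
  define c :: R where "c = (if 1 \<in> \<Delta> \<and> 2 \<in> \<Delta> then -1 else 1)"
  have swap_eq: "\<Delta> = swap12 \<Gamma> \<longleftrightarrow> \<Gamma> = swap12 \<Delta>" for \<Gamma>
    using swap12_swap12 by metis
  have se: "sigma_e \<Gamma> \<Delta> = (if \<Gamma> = swap12 \<Delta> then c else 0)" for \<Gamma>
  proof (cases "(1 \<in> \<Gamma>) = (2 \<in> \<Gamma>)")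
    case True
    then have "\<Delta> = \<Gamma> \<longleftrightarrow> \<Gamma> = swap12 \<Delta>" using swap_eq[of \<Gamma>] swap12_fixed[of \<Gamma>] by simp
    then show ?thesis using True unfolding sigma_e_def ind_def c_def by auto
  next
    case False
    then show ?thesis using swap_eq[of \<Gamma>] swap12_legs[of \<Gamma>]
      unfolding sigma_e_def ind_def c_def by auto
  qed
  have "sigma n y \<Delta> = (\<Sum>\<Gamma>\<in>Pow (St n). if \<Gamma> = swap12 \<Delta> then y \<Gamma> * c else 0)"
    unfolding sigma_def by (rule sum.cong) (auto simp: se)
  also have "\<dots> = y (swap12 \<Delta>) * c" using swap12_subset[OF n1 D] by (simp add: sum.delta)
  finally show ?thesis using swap12_fixed[of \<Delta>] by (auto simp: c_def)
qed

lemma sigma_outside: "1 \<le> n \<Longrightarrow> \<not> \<Delta> \<subseteq> St n \<Longrightarrow> sigma n y \<Delta> = 0"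
proof -
  assume n1: "1 \<le> n" and D: "\<not> \<Delta> \<subseteq> St n"
  have "sigma_e \<Gamma> \<Delta> = 0" if G: "\<Gamma> \<subseteq> St n" for \<Gamma>
    using D G swap12_subset[OF n1 G] by (auto simp: sigma_e_def ind_def)
  then show ?thesis unfolding sigma_def by (simp add: sum.neutral)
qed

lemma poly_mapping_eq_uminus:
  fixes a :: "'k \<Rightarrow>\<^sub>0 'b::linordered_ab_group_add"
  assumes "a = - a"
  shows "a = 0"
proof (rule poly_mapping_eqI)
  fix k
  have "Poly_Mapping.lookup a k = - Poly_Mapping.lookup a k"
    using arg_cong[OF assms, of "\<lambda>b. Poly_Mapping.lookup b k"] by simp
  then show "Poly_Mapping.lookup a k = Poly_Mapping.lookup 0 k" by simp
qed

lemma Ihat_iff: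
  assumes n1: "1 \<le> n"
  shows "y \<in> Ihat n \<longleftrightarrow> y \<in> chat n \<and>
    (\<forall>\<Delta>\<subseteq>St n. (1 \<in> \<Delta> \<and> 2 \<in> \<Delta> \<longrightarrow> y \<Delta> = 0) \<and> y (swap12 \<Delta>) = y \<Delta>)"
proof (cases "y \<in> chat n")
  case True
  have inside: "sigma n y \<Delta> = y \<Delta> \<longleftrightarrow> (1 \<in> \<Delta> \<and> 2 \<in> \<Delta> \<longrightarrow> y \<Delta> = 0) \<and> y (swap12 \<Delta>) = y \<Delta>"
    if D: "\<Delta> \<subseteq> St n" for \<Delta>
  proof (cases "1 \<in> \<Delta> \<and> 2 \<in> \<Delta>")
    case legs: True
    then have "swap12 \<Delta> = \<Delta>" by (intro swap12_fixed) simp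
    then show ?thesis using sigma_eval[OF n1 D, of y] legs poly_mapping_eq_uminus[of "y \<Delta>"] by auto
  next
    case False
    then show ?thesis using sigma_eval[OF n1 D, of y] by auto
  qed
  have outside: "sigma n y \<Delta> = y \<Delta>" if "\<not> \<Delta> \<subseteq> St n" for \<Delta>
    using sigma_outside[OF n1 that] True that by (simp add: chat_def)
  have "sigma n y = y \<longleftrightarrow> (\<forall>\<Delta>\<subseteq>St n. (1 \<in> \<Delta> \<and> 2 \<in> \<Delta> \<longrightarrow> y \<Delta> = 0) \<and> y (swap12 \<Delta>) = y \<Delta>)"
    (is "_ \<longleftrightarrow> (\<forall>\<Delta>\<subseteq>St n. ?Q \<Delta>)")
  proof
    assume "sigma n y = y"
    then show "\<forall>\<Delta>\<subseteq>St n. ?Q \<Delta>" using inside by simp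
  next
    assume Q: "\<forall>\<Delta>\<subseteq>St n. ?Q \<Delta>"
    show "sigma n y = y"
    proof
      fix \<Delta>
      show "sigma n y \<Delta> = y \<Delta>"
      proof (cases "\<Delta> \<subseteq> St n")
        case True
        then show ?thesis using Q inside[OF True] by simp
      qed (rule outside)
    qed
  qed
  then show ?thesis using True by (simp add: Ihat_def)
qed (simp add: Ihat_def)

section \<open>beta is an isomorphism onto the invariants\<close>

text \<open>x can be read off from beta x on the lifts iota 1 ` Gamma.\<close>
lemma beta_inj:
  assumes n: "2 \<le> n"
  shows "inj_on (beta n) (cochains {1..n} (B_mat n))"
proof (rule inj_onI, rule ext)
  fix x y \<Gamma> assume x: "x \<in> cochains {1..n} (B_mat n)" and y: "y \<in> cochains {1..n} (B_mat n)"
    and e: "beta n x = beta n y"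
  show "x \<Gamma> = y \<Gamma>"
  proof (cases "\<Gamma> \<subseteq> {1..n}")
    case True
    have lift: "admissible n (iota 1 ` \<Gamma>) \<and> \<Gamma> = kappa ` iota 1 ` \<Gamma>"
      using lifts_iff_admissible[OF n True, of "iota 1 ` \<Gamma>"] by simp
    have "beta n x (iota 1 ` \<Gamma>) = beta n y (iota 1 ` \<Gamma>)" using e by simp
    then show ?thesis unfolding beta_eval[OF n] using lift by simp
  next
    case False
    then show ?thesis using x y by (auto simp: cochains_def fin_type_def)
  qed
qed

text \<open>beta x vanishes on non-admissible faces and depends only on the folded face.\<close>
lemma beta_image_invariant:
  assumes n: "2 \<le> n"
  shows "beta n x \<in> Ihat n"
proof -
  have n1: "1 \<le> n" using n by simp
  have "beta n x \<in> chat n" using beta_eval[OF n] by (auto simp: chat_def admissible_def)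
  moreover have "(1 \<in> \<Delta> \<and> 2 \<in> \<Delta> \<longrightarrow> beta n x \<Delta> = 0) \<and> beta n x (swap12 \<Delta>) = beta n x \<Delta>"
    if D: "\<Delta> \<subseteq> St n" for \<Delta>
  proof -
    have "admissible n (swap12 \<Delta>) = admissible n \<Delta>"
      using swap12_subset[OF n1 D] swap12_legs[of \<Delta>] D by (auto simp: admissible_def)
    then show ?thesis unfolding beta_eval[OF n] kappa_swap12 by (simp add: admissible_def)
  qed
  ultimately show ?thesis unfolding Ihat_iff[OF n1] by blast
qed

lemma iota_kappa_admissible:
  assumes n: "2 \<le> n" and D: "admissible n \<Delta>"
  shows "iota 1 ` kappa ` \<Delta> = (if 2 \<in> \<Delta> then swap12 \<Delta> else \<Delta>)"
proof -
  have DS: "\<Delta> \<subseteq> St n" and legs: "\<not> (1 \<in> \<Delta> \<and> 2 \<in> \<Delta>)" using D by (auto simp: admissible_def)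
  show ?thesis
  proof (cases "2 \<in> \<Delta>")
    case False
    then show ?thesis using iota_kappa_image[of 1 \<Delta> n] DS by simp
  next
    case True
    have "swap12 \<Delta> \<subseteq> St n" and "2 \<notin> swap12 \<Delta>"
      using swap12_subset[OF _ DS] swap12_legs(2)[of \<Delta>] legs True n by auto
    then show ?thesis using iota_kappa_image[of 1 "swap12 \<Delta>" n] kappa_swap12[of \<Delta>] True by simp
  qed
qed

text \<open>An invariant cochain is beta of its restriction along iota 1.\<close>
lemma invariant_in_beta_image:
  assumes n: "2 \<le> n" and y: "y \<in> Ihat n"
  shows "y \<in> beta n ` cochains {1..n} (B_mat n)"
proof
  have n1: "1 \<le> n" using n by simp
  have ych: "y \<in> chat n" and inv: "\<forall>\<Delta>\<subseteq>St n. (1 \<in> \<Delta> \<and> 2 \<in> \<Delta> \<longrightarrow> y \<Delta> = 0) \<and> y (swap12 \<Delta>) = y \<Delta>"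
    using y by (auto simp: Ihat_iff[OF n1])
  define x where "x \<Gamma> = (if \<Gamma> \<subseteq> {1..n} then y (iota 1 ` \<Gamma>) else 0)" for \<Gamma>
  show "x \<in> cochains {1..n} (B_mat n)"
    unfolding cochains_def x_def using B_fin_type[OF n] by auto
  show "y = beta n x"
  proof
    fix \<Delta>
    show "y \<Delta> = beta n x \<Delta>"
    proof (cases "admissible n \<Delta>")
      case True
      then have D: "\<Delta> \<subseteq> St n" by (simp add: admissible_def)
      have "beta n x \<Delta> = y (iota 1 ` kappa ` \<Delta>)"
        using beta_eval[OF n] True kappa_image_range[OF n D] by (simp add: x_def)
      also have "\<dots> = y \<Delta>" using iota_kappa_admissible[OF n True] inv D by simp
      finally show ?thesis ..
    next
      case False
      have "y \<Delta> = 0"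
      proof (cases "\<Delta> \<subseteq> St n")
        case True
        then show ?thesis using False inv by (simp add: admissible_def)
      qed (use ych in \<open>simp add: chat_def\<close>)
      then show ?thesis using False by (simp add: beta_eval[OF n])
    qed
  qed
qed

theorem mainTheorem4:
  fixes n :: nat
  assumes "2 \<le> n"
  shows "(\<forall>x\<in>cochains {1..n} (B_mat n).
            beta n (salvetti_d {1..n} (B_mat n) (eta_B n) x) = dhat n (beta n x))
       \<and> inj_on (beta n) (cochains {1..n} (B_mat n))
       \<and> beta n ` cochains {1..n} (B_mat n) = Ihat n"
proof (intro conjI ballI)
  show "beta n (salvetti_d {1..n} (B_mat n) (eta_B n) x) = dhat n (beta n x)" for x
    by (rule beta_chain_map[OF assms])
  show "inj_on (beta n) (cochains {1..n} (B_mat n))"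
    by (rule beta_inj[OF assms])
  show "beta n ` cochains {1..n} (B_mat n) = Ihat n"
    using beta_image_invariant[OF assms] invariant_in_beta_image[OF assms] by blast
qed

end
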